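(* Let $\nu\in\mathcal N$. Then the process $$L_\nu(x,t):=\sup_{z\le x}\big\{\nu(z)+L((z,0),(x,t))\big\},\qquad x\in\mathbb R,\ t\ge0,$$ is almost surely well defined (finite), and the measures $M^t_\nu$ on $\mathbb R$ defined by $M^t_\nu((x,y]):=L_\nu(y,t)-L_\nu(x,t)$ for $x\le y$ are positive locally finite measures which evolve in $t\ge0$ according to the Hammersley interacting fluid system, i.e. $M^0_\nu=\nu$ and: if there is a point of $\mathbf P$ at $(x_0,t)$ with weight $\omega$, then $M^t_\nu=M^{t-}_\nu$ on $(-\infty,x_0)$, $M^t_\nu(\{x_0\})=M^{t-}_\nu(\{x_0\})+\omega$, and $M^t_\nu((x_0,x])=\big(M^{t-}_\nu((x_0,x])-\omega\big)_+$ for all $x>x_0$, where $M^{t-}_\nu$ is the configuration obtained if the point at $(x_0,t)$ were removed.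
   Context: Let $\mathbf P\subset\mathbb R^2$ be a homogeneous Poisson point process of intensity one with i.i.d. positive weights $\{\omega_{\mathbf p}\}$ of distribution $F$, independent of $\mathbf P$; assume $\int_0^\infty e^{ax}dF(x)<\infty$ for some $a>0$. For $\mathbf p\le\mathbf q$ (coordinatewise), $L(\mathbf p,\mathbf q)$ is the maximal total weight of a coordinatewise increasing finite sequence of points of $\mathbf P$ in $\{\mathbf x:p_1<x_1\le q_1,\ p_2<x_2\le q_2\}$ (empty sum $0$); only points of $\mathbf P$ in $\mathbb R\times(0,\infty)$ are relevant here. For a positive locally finite measure $\nu$ on $\mathbb R$ write $\nu(x)=\nu((0,x])$ for $x\ge0$ and $\nu(x)=-\nu((x,0])$ for $x<0$. $\mathcal N$ is the set of positive locally finite measures $\nu$ on $\mathbb R$ with $\liminf_{y\to-\infty}\nu(y)/y>0$. *)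

theory Defs
  imports "HOL-Probability.Probability"
begin

text \<open>A marked point configuration: a set of pairs (location in the plane, weight).\<close>
type_synonym mconf = "((real \<times> real) \<times> real) set"

definition incr_chain :: "((real \<times> real) \<times> real) list \<Rightarrow> bool" where
  "incr_chain xs \<longleftrightarrow> sorted_wrt (\<lambda>a b. fst (fst a) \<le> fst (fst b) \<and> snd (fst a) \<le> snd (fst b)
       \<and> fst a \<noteq> fst b) xs"

definition LPP :: "mconf \<Rightarrow> real \<times> real \<Rightarrow> real \<times> real \<Rightarrow> ereal" where
  "LPP Q p q = (SUP xs \<in> {xs. set xs \<subseteq> Q \<and> incr_chain xs \<and>
      (\<forall>a\<in>set xs. fst p < fst (fst a) \<and> fst (fst a) \<le> fst q \<and>
                  snd p < snd (fst a) \<and> snd (fst a) \<le> snd q)}.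
      ereal (sum_list (map snd xs)))"

text \<open>The signed distribution function nu(x) of a measure on the line.\<close>
definition nuF :: "real measure \<Rightarrow> real \<Rightarrow> real" where
  "nuF \<nu> x = (if 0 \<le> x then measure \<nu> {0<..x} else - measure \<nu> {x<..0})"

definition calN :: "real measure set" where
  "calN = {\<nu>. sets \<nu> = sets borel \<and> (\<forall>a b. emeasure \<nu> {a<..b} < \<infinity>) \<and>
              Liminf at_bot (\<lambda>y. ereal (nuF \<nu> y / y)) > 0}"

definition Lnu :: "mconf \<Rightarrow> real measure \<Rightarrow> real \<Rightarrow> real \<Rightarrow> ereal" where
  "Lnu Q \<nu> x t = (SUP z \<in> {..x}. ereal (nuF \<nu> z) + LPP Q (z, 0) (x, t))"

definition is_M :: "mconf \<Rightarrow> real measure \<Rightarrow> real \<Rightarrow> real measure \<Rightarrow> bool" where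
  "is_M Q \<nu> t m \<longleftrightarrow> sets m = sets borel \<and> (\<forall>a b. emeasure m {a<..b} < \<infinity>) \<and>
     (\<forall>x y. x \<le> y \<longrightarrow> ereal (measure m {x<..y}) = Lnu Q \<nu> y t - Lnu Q \<nu> x t)"

definition Mt :: "mconf \<Rightarrow> real measure \<Rightarrow> real \<Rightarrow> real measure" where
  "Mt Q \<nu> t = (THE m. is_M Q \<nu> t m)"

text \<open>Q is a Poisson point process on (R^2) x R with intensity Lebesgue (x) F,
  i.e. a Poisson process of intensity one in the plane with i.i.d. marks of law F
  independent of the points (marking theorem).\<close>
definition marked_poisson :: "'a measure \<Rightarrow> ('a \<Rightarrow> mconf) \<Rightarrow> real measure \<Rightarrow> bool" where
  "marked_poisson M Q F \<longleftrightarrow>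
     (let \<mu> = (lborel :: (real \<times> real) measure) \<Otimes>\<^sub>M F in
       (\<forall>B \<in> sets \<mu>. emeasure \<mu> B < \<infinity> \<longrightarrow>
          (AE \<omega> in M. finite (Q \<omega> \<inter> B)) \<and>
          (\<forall>k::nat. {\<omega> \<in> space M. card (Q \<omega> \<inter> B) = k} \<in> sets M \<and>
             measure M {\<omega> \<in> space M. card (Q \<omega> \<inter> B) = k}
               = measure \<mu> B ^ k / fact k * exp (- measure \<mu> B))) \<and>
       (\<forall>(I::nat set) B. finite I \<longrightarrow> B ` I \<subseteq> sets \<mu> \<longrightarrow>
          (\<forall>i\<in>I. emeasure \<mu> (B i) < \<infinity>) \<longrightarrow> disjoint_family_on B I \<longrightarrow>
          prob_space.indep_vars M (\<lambda>_. count_space UNIV) (\<lambda>i \<omega>. card (Q \<omega> \<inter> B i)) I))"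

end

theory Submission
  imports Defs "HOL-Real_Asymp.Real_Asymp"
begin

text \<open>
  Almost surely the configuration is regular: finitely many points in bounded sets, positive
  weights, no two points sharing a coordinate, no point above an atom of \<open>\<nu>\<close>, and sublinear last
  passage values \<open>L((-r,0),(r,T)) = o(r)\<close>.  The last property follows from Borel--Cantelli on a
  dyadic grid: the box \<open>(-4\<^sup>j,4\<^sup>j] \<times> (0,T]\<close> is split into \<open>2\<^sup>j \<times> 2\<^sup>j\<close> cells; eventually no cell
  carries \<open>j\<close> points and no weight in the box exceeds \<open>4j/a\<close>; an increasing chain meets at most
  \<open>2\<cdot>2\<^sup>j\<close> cells, so its weight is \<open>O(j\<^sup>2 2\<^sup>j) = o(4\<^sup>j)\<close>.  Together with \<open>\<nu>(y) \<le> c y\<close> as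
  \<open>y \<rightarrow> -\<infinity>\<close> this makes the supremum defining \<open>L\<^sub>\<nu>\<close> finite.  For a regular configuration,
  \<open>L\<^sub>\<nu>(\<cdot>,t)\<close> is nondecreasing and right-continuous, hence the distribution function of a
  unique measure \<open>M\<^sup>t\<^sub>\<nu>\<close>.  Adding a point \<open>(x\<^sub>0,t)\<close> of weight \<open>w\<close> to a configuration with values
  \<open>L\<^sup>-\<close> leaves \<open>L\<^sub>\<nu>(x,t)\<close> unchanged for \<open>x < x\<^sub>0\<close> and turns it into \<open>max (L\<^sup>-(x), L\<^sup>-(x\<^sub>0) + w)\<close>
  for \<open>x \<ge> x\<^sub>0\<close>, since an optimal chain through the point ends there; in terms of increments
  this is exactly the Hammersley update.
\<close>

section \<open>Locally finite measures on the line\<close>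

definition locally_finite_borel :: "real measure \<Rightarrow> bool" where
  "locally_finite_borel m \<longleftrightarrow> sets m = sets borel \<and> (\<forall>a b. emeasure m {a<..b} < \<infinity>)"

lemma locally_finite_borel_emeasure_Ioc_neq_top:
  "locally_finite_borel m \<Longrightarrow> emeasure m {a<..b} \<noteq> \<infinity>"
  unfolding locally_finite_borel_def by (auto simp: less_top)

lemma locally_finite_borel_emeasure_Ioc:
  "locally_finite_borel m \<Longrightarrow> emeasure m {a<..b} = ennreal (measure m {a<..b})"
  by (simp add: emeasure_eq_ennreal_measure locally_finite_borel_def less_top)

lemma locally_finite_borel_emeasure_singleton:
  assumes "locally_finite_borel m"
  shows "emeasure m {x} = ennreal (measure m {x})"
proof (rule emeasure_eq_ennreal_measure)
  have "emeasure m {x} \<le> emeasure m {x - 1<..x}"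
    using assms by (intro emeasure_mono) (auto simp: locally_finite_borel_def)
  then show "emeasure m {x} \<noteq> top"
    using locally_finite_borel_emeasure_Ioc_neq_top[OF assms] by (metis infinity_ennreal_def neq_top_trans)
qed

lemma measure_Ioc_split:
  assumes "locally_finite_borel m" "a \<le> b" "b \<le> c"
  shows "measure m {a<..c} = measure m {a<..b} + measure m {b<..c}"
proof -
  have "{a<..c} = {a<..b} \<union> {b<..c}" using assms(2,3) by auto
  moreover have "measure m ({a<..b} \<union> {b<..c}) = measure m {a<..b} + measure m {b<..c}"
    by (rule measure_Union) (use assms(1) in \<open>auto simp: locally_finite_borel_def less_top\<close>)
  ultimately show ?thesis by simp
qed

lemma nuF_diff:
  assumes lf: "locally_finite_borel \<nu>" and xy: "x \<le> y"
  shows "nuF \<nu> y - nuF \<nu> x = measure \<nu> {x<..y}"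
proof (cases "0 \<le> x")
  case True
  then have "nuF \<nu> y = measure \<nu> {0<..y}" "nuF \<nu> x = measure \<nu> {0<..x}"
    using xy unfolding nuF_def by auto
  then show ?thesis using measure_Ioc_split[OF lf True xy] by linarith
next
  case False
  show ?thesis
  proof (cases "0 \<le> y")
    case True
    then have "nuF \<nu> y = measure \<nu> {0<..y}" "nuF \<nu> x = - measure \<nu> {x<..0}"
      using False unfolding nuF_def by auto
    then show ?thesis using measure_Ioc_split[OF lf _ True, of x] False by linarith
  next
    case False2: False
    then have "nuF \<nu> y = - measure \<nu> {y<..0}" "nuF \<nu> x = - measure \<nu> {x<..0}"
      using False unfolding nuF_def by auto
    then show ?thesis using measure_Ioc_split[OF lf xy, of 0] False2 by linarith
  qed
qed

lemma nuF_mono: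
  assumes "locally_finite_borel \<nu>" "x \<le> y"
  shows "nuF \<nu> x \<le> nuF \<nu> y"
  using nuF_diff[OF assms] measure_nonneg[of \<nu> "{x<..y}"] by linarith

lemma nuF_right_continuous:
  assumes lf: "locally_finite_borel \<nu>"
  shows "continuous (at_right a) (nuF \<nu>)"
  unfolding continuous_within
proof (rule tendsto_at_right_sequentially[where b = "a + 1"])
  fix f :: "nat \<Rightarrow> real"
  assume gt: "\<And>n. a < f n" and "\<And>n. f n < a + 1" and dec: "decseq f" and lim: "f \<longlonglongrightarrow> a"
  have "(\<lambda>n. measure \<nu> {a<..f n}) \<longlonglongrightarrow> measure \<nu> (\<Inter>n. {a<..f n})"
  proof (rule Lim_measure_decseq)
    show "decseq (\<lambda>n. {a<..f n})"
    proof (rule decseq_SucI)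
      fix n show "{a<..f (Suc n)} \<subseteq> {a<..f n}" using decseqD[OF dec, of n "Suc n"] by auto
    qed
  qed (use lf in \<open>auto simp: locally_finite_borel_def less_top\<close>)
  moreover have "(\<Inter>n. {a<..f n}) = {}"
  proof -
    have False if x: "x \<in> (\<Inter>n. {a<..f n})" for x
    proof -
      from x have "a < x" by auto
      then have "eventually (\<lambda>n. f n < x) sequentially" using order_tendstoD(2)[OF lim] by blast
      then obtain n where "f n < x" by (auto simp: eventually_sequentially)
      moreover from x have "x \<in> {a<..f n}" by blast
      ultimately show False by simp
    qed
    then show ?thesis by blast
  qed
  moreover have "measure \<nu> {a<..f n} = nuF \<nu> (f n) - nuF \<nu> a" for n
    using nuF_diff[OF lf, of a "f n"] gt[of n] by simp
  ultimately have "(\<lambda>n. nuF \<nu> (f n) - nuF \<nu> a) \<longlonglongrightarrow> 0" by simp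
  then have "(\<lambda>n. (nuF \<nu> (f n) - nuF \<nu> a) + nuF \<nu> a) \<longlonglongrightarrow> 0 + nuF \<nu> a"
    by (intro tendsto_add tendsto_const)
  then show "(\<lambda>n. nuF \<nu> (f n)) \<longlonglongrightarrow> nuF \<nu> a" by simp
qed simp

lemma measure_Ioc_shrink_to_atom:
  assumes "locally_finite_borel m"
  shows "(\<lambda>n. measure m {x - 1 / Suc n<..x}) \<longlonglongrightarrow> measure m {x}"
proof -
  let ?f = "\<lambda>n::nat. x - 1 / Suc n"
  have "(\<lambda>n. measure m {?f n<..x}) \<longlonglongrightarrow> measure m (\<Inter>n. {?f n<..x})"
  proof (rule Lim_measure_decseq)
    show "decseq (\<lambda>n. {?f n<..x})"
    proof (rule decseq_SucI)
      fix n :: nat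
      have "1 / real (Suc (Suc n)) \<le> 1 / real (Suc n)" by (rule frac_le) auto
      then show "{?f (Suc n)<..x} \<subseteq> {?f n<..x}" by auto
    qed
    show "range (\<lambda>n. {?f n<..x}) \<subseteq> sets m"
      using assms by (auto simp: locally_finite_borel_def)
    show "emeasure m {?f n<..x} \<noteq> \<infinity>" for n
      by (rule locally_finite_borel_emeasure_Ioc_neq_top[OF assms])
  qed
  moreover have "(\<Inter>n. {?f n<..x}) = {x}"
  proof (intro equalityI subsetI)
    fix y assume y: "y \<in> (\<Inter>n. {?f n<..x})"
    show "y \<in> {x}"
    proof (rule ccontr)
      assume "y \<notin> {x}"
      with y have "0 < x - y" by auto
      then obtain n :: nat where "1 / Suc n < x - y" by (rule nat_approx_posE)
      moreover from y have "y \<in> {?f n<..x}" by blast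
      ultimately show False by simp
    qed
  qed auto
  ultimately show ?thesis by simp
qed

lemma nuF_left_approx_at_nonatom:
  assumes lf: "locally_finite_borel \<nu>" and atom: "emeasure \<nu> {a} = 0" and "e > 0"
  obtains z where "z < a" "nuF \<nu> a - e < nuF \<nu> z"
proof -
  have "measure \<nu> {a} = 0" using atom by (simp add: measure_def)
  then have "(\<lambda>n. measure \<nu> {a - 1 / Suc n<..a}) \<longlonglongrightarrow> 0"
    using measure_Ioc_shrink_to_atom[OF lf, of a] by simp
  then obtain n where "norm (measure \<nu> {a - 1 / Suc n<..a} - 0) < e"
    using LIMSEQ_D \<open>e > 0\<close> by blast
  moreover have "nuF \<nu> a - nuF \<nu> (a - 1 / Suc n) = measure \<nu> {a - 1 / Suc n<..a}"
    by (rule nuF_diff[OF lf]) simp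
  ultimately show ?thesis by (intro that[of "a - 1 / Suc n"]) auto
qed

lemma emeasure_Ioc_grow_to_Ioo:
  assumes "sets m = sets borel"
  shows "(\<lambda>n. emeasure m {a<..x - 1 / Suc n}) \<longlonglongrightarrow> emeasure m {a<..<x}"
proof -
  let ?f = "\<lambda>n::nat. x - 1 / Suc n"
  have "(\<lambda>n. emeasure m {a<..?f n}) \<longlonglongrightarrow> emeasure m (\<Union>n. {a<..?f n})"
  proof (rule Lim_emeasure_incseq)
    show "incseq (\<lambda>n. {a<..?f n})"
    proof (rule incseq_SucI)
      fix n :: nat
      have "1 / real (Suc (Suc n)) \<le> 1 / real (Suc n)" by (rule frac_le) auto
      then show "{a<..?f n} \<subseteq> {a<..?f (Suc n)}" by auto
    qed
    show "range (\<lambda>n. {a<..?f n}) \<subseteq> sets m"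
      unfolding assms by (intro image_subsetI greaterThanAtMost_borel)
  qed
  moreover have "(\<Union>n. {a<..?f n}) = {a<..<x}"
  proof (intro equalityI subsetI)
    fix y assume "y \<in> (\<Union>n. {a<..?f n})"
    then obtain n where "y \<in> {a<..?f n}" by blast
    then have "a < y" "y \<le> x - 1 / real (Suc n)" unfolding greaterThanAtMost_iff by auto
    moreover have "0 < 1 / real (Suc n)" by simp
    ultimately have "a < y" "y < x" by linarith+
    then show "y \<in> {a<..<x}" by simp
  next
    fix y assume y: "y \<in> {a<..<x}"
    then have "0 < x - y" by simp
    then obtain n :: nat where "1 / Suc n < x - y" by (rule nat_approx_posE)
    then show "y \<in> (\<Union>n. {a<..?f n})" using y by (intro UN_I[of n]) auto
  qed
  ultimately show ?thesis by simp
qed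

lemma sets_borel_eq_sigma_Ioc:
  "sets (borel :: real measure) = sigma_sets UNIV (range (\<lambda>(a, b). {a<..b}))"
  by (subst borel_sigma_sets_Ioc) (rule sets_measure_of, simp)

lemma locally_finite_borel_eqI:
  assumes lf: "locally_finite_borel m1" and S2: "sets m2 = sets borel"
    and eq: "\<And>a b. emeasure m1 {a<..b} = emeasure m2 {a<..b}"
  shows "m1 = m2"
proof (rule measure_eqI_generator_eq[where E = "range (\<lambda>(a, b). {a<..b})" and \<Omega> = UNIV
      and A = "\<lambda>n. {- real n<..real n}"])
  show "Int_stable (range (\<lambda>(a, b). {a<..b::real}))"
    unfolding Int_stable_def by (auto simp: image_iff)
  show "sets m1 = sigma_sets UNIV (range (\<lambda>(a, b). {a<..b}))"
    using lf sets_borel_eq_sigma_Ioc by (simp add: locally_finite_borel_def)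
  show "sets m2 = sigma_sets UNIV (range (\<lambda>(a, b). {a<..b}))"
    using S2 sets_borel_eq_sigma_Ioc by simp
  show "(\<Union>n. {- real n<..real n}) = UNIV"
  proof (intro equalityI subsetI)
    fix x :: real
    obtain n :: nat where "\<bar>x\<bar> < real n" using reals_Archimedean2 by blast
    then show "x \<in> (\<Union>n. {- real n<..real n})" by (intro UN_I[of n]) auto
  qed simp
  show "emeasure m1 {- real n<..real n} \<noteq> \<infinity>" for n
    by (rule locally_finite_borel_emeasure_Ioc_neq_top[OF lf])
qed (use eq in auto)

lemma emeasure_eq_on_lessThan:
  assumes lf1: "locally_finite_borel m1" and lf2: "locally_finite_borel m2"
    and eq: "\<And>a b. b < x \<Longrightarrow> emeasure m1 {a<..b} = emeasure m2 {a<..b}"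
    and A: "A \<in> sets borel" "A \<subseteq> {..<x}"
  shows "emeasure m1 A = emeasure m2 A"
proof -
  let ?I = "indicator {..<x} :: real \<Rightarrow> ennreal"
  have dens: "emeasure (density m ?I) X = emeasure m (X \<inter> {..<x})"
    if "sets m = sets borel" "X \<in> sets borel" for m :: "real measure" and X
  proof -
    have "emeasure (density m ?I) X = (\<integral>\<^sup>+ y. ?I y * indicator X y \<partial>m)"
      using that by (intro emeasure_density) auto
    also have "\<dots> = (\<integral>\<^sup>+ y. indicator (X \<inter> {..<x}) y \<partial>m)"
      by (rule nn_integral_cong) (simp split: split_indicator)
    also have "\<dots> = emeasure m (X \<inter> {..<x})"
      using that by (intro nn_integral_indicator) auto
    finally show ?thesis .
  qed
  have Sm: "sets m1 = sets borel" "sets m2 = sets borel"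
    using lf1 lf2 by (auto simp: locally_finite_borel_def)
  have "emeasure m1 ({a<..b} \<inter> {..<x}) = emeasure m2 ({a<..b} \<inter> {..<x})" for a b
  proof (cases "b < x")
    case True
    then show ?thesis using eq[OF True] by (simp add: Int_absorb2 subset_eq)
  next
    case False
    then have "{a<..b} \<inter> {..<x} = {a<..<x}" by auto
    moreover have "emeasure m1 {a<..<x} = emeasure m2 {a<..<x}"
      using emeasure_Ioc_grow_to_Ioo[OF Sm(1), of a x] emeasure_Ioc_grow_to_Ioo[OF Sm(2), of a x]
        eq[of "x - 1 / Suc _"] by (auto intro: LIMSEQ_unique)
    ultimately show ?thesis by simp
  qed
  moreover have "locally_finite_borel (density m1 ?I)"
    unfolding locally_finite_borel_def
  proof (intro conjI allI)
    fix a b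
    have "emeasure m1 ({a<..b} \<inter> {..<x}) \<le> emeasure m1 {a<..b}"
      using Sm by (intro emeasure_mono) auto
    then show "emeasure (density m1 ?I) {a<..b} < \<infinity>"
      using lf1 Sm dens by (auto simp: locally_finite_borel_def intro: le_less_trans)
  qed (use Sm in simp)
  ultimately have "density m1 ?I = density m2 ?I"
    using Sm dens by (intro locally_finite_borel_eqI) auto
  then show ?thesis
    using dens[OF Sm(1) A(1)] dens[OF Sm(2) A(1)] A(2) by (simp add: Int_absorb2)
qed

lemma countable_atoms:
  assumes lf: "locally_finite_borel \<nu>"
  shows "countable {x. emeasure \<nu> {x} \<noteq> 0}"
proof -
  have sp: "space \<nu> = UNIV"
    using lf sets_eq_imp_space_eq[of \<nu> borel] by (simp add: locally_finite_borel_def)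
  let ?R = "\<lambda>n::nat. restrict_space \<nu> {- real n<..real n}"
  have "{x. emeasure \<nu> {x} \<noteq> 0} \<subseteq> (\<Union>n. {x. measure (?R n) {x} \<noteq> 0})"
  proof
    fix x assume x: "x \<in> {x. emeasure \<nu> {x} \<noteq> 0}"
    obtain n :: nat where n: "\<bar>x\<bar> < real n" using reals_Archimedean2 by blast
    then have "emeasure (?R n) {x} = emeasure \<nu> {x}"
      using lf sp by (intro emeasure_restrict_space) (auto simp: locally_finite_borel_def)
    then have "measure (?R n) {x} = measure \<nu> {x}" by (simp add: measure_def)
    moreover have "measure \<nu> {x} \<noteq> 0"
      using x locally_finite_borel_emeasure_singleton[OF lf, of x] by auto
    ultimately have "measure (?R n) {x} \<noteq> 0" by simp
    then show "x \<in> (\<Union>n. {x. measure (?R n) {x} \<noteq> 0})" by blast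
  qed
  moreover have "countable {x. measure (?R n) {x} \<noteq> 0}" for n
  proof (rule finite_measure.countable_support, rule finite_measureI)
    have "emeasure (?R n) (space (?R n)) = emeasure \<nu> {- real n<..real n}"
      using lf sp by (simp add: space_restrict_space emeasure_restrict_space locally_finite_borel_def)
    then show "emeasure (?R n) (space (?R n)) \<noteq> \<infinity>"
      using locally_finite_borel_emeasure_Ioc_neq_top[OF lf] by simp
  qed
  then have "countable (\<Union>n. {x. measure (?R n) {x} \<noteq> 0})" by blast
  ultimately show ?thesis by (rule countable_subset)
qed

lemma calN_locally_finite_borel: "\<nu> \<in> calN \<Longrightarrow> locally_finite_borel \<nu>"
  by (simp add: calN_def locally_finite_borel_def)

lemma calN_linear_upper_bound:
  assumes "\<nu> \<in> calN"
  obtains c K where "0 < c" "\<And>y. y \<le> K \<Longrightarrow> nuF \<nu> y \<le> c * y"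
proof -
  have "0 < Liminf at_bot (\<lambda>y. ereal (nuF \<nu> y / y))" using assms by (auto simp: calN_def)
  then obtain c where c: "0 < ereal c" "ereal c < Liminf at_bot (\<lambda>y. ereal (nuF \<nu> y / y))"
    using ereal_dense2 by blast
  have "eventually (\<lambda>y. ereal c < ereal (nuF \<nu> y / y)) at_bot" by (rule less_LiminfD[OF c(2)])
  then obtain K where K: "\<And>y. y \<le> K \<Longrightarrow> c < nuF \<nu> y / y"
    unfolding eventually_at_bot_linorder by auto
  have "nuF \<nu> y \<le> c * y" if "y \<le> min K (-1)" for y
  proof -
    have "c < nuF \<nu> y / y" "y < 0" using that K by auto
    then show ?thesis by (simp add: neg_less_divide_eq)
  qed
  with c(1) show ?thesis by (intro that[of c "min K (-1)"]) auto
qed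

section \<open>Last passage values\<close>

definition in_box :: "real \<times> real \<Rightarrow> real \<times> real \<Rightarrow> (real \<times> real) \<times> real \<Rightarrow> bool" where
  "in_box p q a \<longleftrightarrow> fst p < fst (fst a) \<and> fst (fst a) \<le> fst q \<and>
                   snd p < snd (fst a) \<and> snd (fst a) \<le> snd q"

definition box_points :: "mconf \<Rightarrow> real \<times> real \<Rightarrow> real \<times> real \<Rightarrow> mconf" where
  "box_points Q p q = {a \<in> Q. in_box p q a}"

definition box_chains :: "mconf \<Rightarrow> real \<times> real \<Rightarrow> real \<times> real \<Rightarrow> ((real \<times> real) \<times> real) list set" where
  "box_chains Q p q = {xs. set xs \<subseteq> box_points Q p q \<and> incr_chain xs}"

lemma LPP_eq_SUP_box_chains: "LPP Q p q = (SUP xs \<in> box_chains Q p q. ereal (sum_list (map snd xs)))"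
proof -
  have "{xs. set xs \<subseteq> Q \<and> incr_chain xs \<and> (\<forall>a\<in>set xs. fst p < fst (fst a) \<and> fst (fst a) \<le> fst q \<and>
           snd p < snd (fst a) \<and> snd (fst a) \<le> snd q)} = box_chains Q p q"
    unfolding box_chains_def box_points_def in_box_def by blast
  then show ?thesis by (simp add: LPP_def)
qed

lemma Nil_in_box_chains: "[] \<in> box_chains Q p q"
  by (simp add: box_chains_def incr_chain_def)

lemma LPP_ge_chain: "xs \<in> box_chains Q p q \<Longrightarrow> ereal (sum_list (map snd xs)) \<le> LPP Q p q"
  unfolding LPP_eq_SUP_box_chains by (rule SUP_upper)

lemma LPP_nonneg: "0 \<le> LPP Q p q"
  using LPP_ge_chain[OF Nil_in_box_chains] by (simp add: zero_ereal_def)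

lemma LPP_leI: "(\<And>xs. xs \<in> box_chains Q p q \<Longrightarrow> ereal (sum_list (map snd xs)) \<le> B) \<Longrightarrow> LPP Q p q \<le> B"
  unfolding LPP_eq_SUP_box_chains by (rule SUP_least)

lemma incr_chain_distinct: "incr_chain xs \<Longrightarrow> distinct xs"
  unfolding incr_chain_def by (induction xs) auto

lemma incr_chain_snoc:
  "incr_chain (ys @ [p]) \<longleftrightarrow> incr_chain ys \<and>
     (\<forall>a\<in>set ys. fst (fst a) \<le> fst (fst p) \<and> snd (fst a) \<le> snd (fst p) \<and> fst a \<noteq> fst p)"
  unfolding incr_chain_def sorted_wrt_append by auto

lemma incr_chain_comparable:
  assumes "incr_chain xs" "a \<in> set xs" "b \<in> set xs"
  shows "a = b \<or> (fst (fst a) \<le> fst (fst b) \<and> snd (fst a) \<le> snd (fst b))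
               \<or> (fst (fst b) \<le> fst (fst a) \<and> snd (fst b) \<le> snd (fst a))"
proof -
  have "sorted_wrt R ys \<Longrightarrow> a \<in> set ys \<Longrightarrow> b \<in> set ys \<Longrightarrow> a = b \<or> R a b \<or> R b a" for R ys
    by (induction ys) auto
  then show ?thesis using assms unfolding incr_chain_def by blast
qed

lemma LPP_le_sum_box_points:
  assumes "finite (box_points Q p q)"
  shows "LPP Q p q \<le> ereal (\<Sum>a\<in>box_points Q p q. max 0 (snd a))"
proof (rule LPP_leI)
  fix xs assume xs: "xs \<in> box_chains Q p q"
  then have "sum_list (map snd xs) = (\<Sum>a\<in>set xs. snd a)"
    by (simp add: box_chains_def incr_chain_distinct sum_list_distinct_conv_sum_set)
  also have "\<dots> \<le> (\<Sum>a\<in>set xs. max 0 (snd a))" by (intro sum_mono) auto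
  also have "\<dots> \<le> (\<Sum>a\<in>box_points Q p q. max 0 (snd a))"
    using xs by (intro sum_mono2[OF assms]) (auto simp: box_chains_def)
  finally show "ereal (sum_list (map snd xs)) \<le> ereal (\<Sum>a\<in>box_points Q p q. max 0 (snd a))"
    by simp
qed

lemma LPP_finite: "finite (box_points Q p q) \<Longrightarrow> \<bar>LPP Q p q\<bar> \<noteq> \<infinity>"
  using LPP_le_sum_box_points[of Q p q] LPP_nonneg[of Q p q] by auto

lemma box_points_mono:
  assumes "Q \<subseteq> Q'" "fst p' \<le> fst p" "snd p' \<le> snd p" "fst q \<le> fst q'" "snd q \<le> snd q'"
  shows "box_points Q p q \<subseteq> box_points Q' p' q'"
  using assms unfolding box_points_def in_box_def by force

lemma LPP_mono:
  assumes "Q \<subseteq> Q'" "fst p' \<le> fst p" "snd p' \<le> snd p" "fst q \<le> fst q'" "snd q \<le> snd q'"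
  shows "LPP Q p q \<le> LPP Q' p' q'"
  unfolding LPP_eq_SUP_box_chains
  by (rule SUP_subset_mono) (use box_points_mono[OF assms] in \<open>auto simp: box_chains_def\<close>)

lemma LPP_cong_box_points: "box_points Q p q = box_points Q' p' q' \<Longrightarrow> LPP Q p q = LPP Q' p' q'"
  unfolding LPP_eq_SUP_box_chains box_chains_def by simp

lemma LPP_empty_box: "box_points Q p q = {} \<Longrightarrow> LPP Q p q = 0"
  unfolding LPP_eq_SUP_box_chains box_chains_def by (simp add: incr_chain_def zero_ereal_def)

lemma LPP_flat_box: "snd q \<le> snd p \<Longrightarrow> LPP Q p q = 0"
  by (rule LPP_empty_box) (auto simp: box_points_def in_box_def)

text \<open>
  In the next two lemmas \<open>((x\<^sub>0,t\<^sub>0),w)\<close> is the upper-right corner point of every box considered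
  that contains it, because no other point of the configuration shares a coordinate with it.
\<close>

lemma box_chain_through_corner:
  assumes xs: "xs \<in> box_chains (insert ((x0,t0),w) Q0) (z,0) (x,t0)"
    and p: "((x0,t0),w) \<in> set xs" "((x0,t0),w) \<notin> Q0"
    and dist: "\<forall>a\<in>Q0. 0 < snd (fst a) \<longrightarrow> fst (fst a) \<noteq> x0 \<and> snd (fst a) \<noteq> t0"
  obtains ys where "xs = ys @ [((x0,t0),w)]" "ys \<in> box_chains Q0 (z,0) (x0,t0)"
proof -
  let ?p = "((x0,t0),w)"
  obtain ys zs where xs_eq: "xs = ys @ ?p # zs" using p(1) by (meson split_list)
  have inc: "incr_chain xs" and box: "set xs \<subseteq> box_points (insert ?p Q0) (z,0) (x,t0)"
    using xs by (auto simp: box_chains_def)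
  have before: "\<forall>a\<in>set ys. fst (fst a) \<le> x0 \<and> snd (fst a) \<le> t0 \<and> fst a \<noteq> (x0,t0)"
    and after: "\<forall>b\<in>set zs. t0 \<le> snd (fst b) \<and> (x0,t0) \<noteq> fst b"
    and "incr_chain ys"
    using inc unfolding xs_eq incr_chain_def sorted_wrt_append by auto
  have "zs = []"
  proof (rule ccontr)
    assume "zs \<noteq> []"
    then obtain b where b: "b \<in> set zs" by (cases zs) auto
    then have b': "b \<in> insert ?p Q0" "in_box (z,0) (x,t0) b" "(x0,t0) \<noteq> fst b" "t0 \<le> snd (fst b)"
      using box after by (auto simp: xs_eq box_points_def)
    then have "b \<in> Q0" by auto
    then show False using dist b' by (auto simp: in_box_def)
  qed
  moreover have "ys \<in> box_chains Q0 (z,0) (x0,t0)"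
    using box before \<open>incr_chain ys\<close> incr_chain_distinct[OF inc]
    by (auto simp: box_chains_def box_points_def in_box_def xs_eq)
  ultimately show ?thesis using xs_eq that by blast
qed

lemma snoc_corner_box_chain:
  assumes ys: "ys \<in> box_chains Q0 (z,0) (x0,t0)"
    and dist: "\<forall>a\<in>Q0. 0 < snd (fst a) \<longrightarrow> fst (fst a) \<noteq> x0 \<and> snd (fst a) \<noteq> t0"
    and "z < x0" "x0 \<le> x" "0 < t0"
  shows "ys @ [((x0,t0),w)] \<in> box_chains (insert ((x0,t0),w) Q0) (z,0) (x,t0)"
proof -
  have "\<forall>a\<in>set ys. a \<in> Q0 \<and> in_box (z,0) (x0,t0) a"
    using ys by (auto simp: box_chains_def box_points_def)
  then have "\<forall>a\<in>set ys. fst (fst a) \<le> x0 \<and> snd (fst a) \<le> t0 \<and> fst a \<noteq> (x0,t0)"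
    using dist by (auto simp: in_box_def)
  then show ?thesis
    using ys assms(3-5) by (auto simp: box_chains_def box_points_def in_box_def incr_chain_snoc)
qed

lemma LPP_insert_corner:
  assumes p: "((x0,t0),w) \<notin> Q0"
    and dist: "\<forall>a\<in>Q0. 0 < snd (fst a) \<longrightarrow> fst (fst a) \<noteq> x0 \<and> snd (fst a) \<noteq> t0"
    and zx: "z < x0" "x0 \<le> x" and t0: "0 < t0"
  shows "LPP (insert ((x0,t0),w) Q0) (z,0) (x,t0)
           = max (LPP Q0 (z,0) (x,t0)) (LPP Q0 (z,0) (x0,t0) + ereal w)"
proof (rule antisym)
  let ?p = "((x0,t0),w)" and ?Q = "insert ((x0,t0),w) Q0"
  show "LPP ?Q (z,0) (x,t0) \<le> max (LPP Q0 (z,0) (x,t0)) (LPP Q0 (z,0) (x0,t0) + ereal w)"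
  proof (rule LPP_leI)
    fix xs assume xs: "xs \<in> box_chains ?Q (z,0) (x,t0)"
    show "ereal (sum_list (map snd xs)) \<le> max (LPP Q0 (z,0) (x,t0)) (LPP Q0 (z,0) (x0,t0) + ereal w)"
    proof (cases "?p \<in> set xs")
      case False
      then have "xs \<in> box_chains Q0 (z,0) (x,t0)"
        using xs by (auto simp: box_chains_def box_points_def)
      then show ?thesis by (simp add: le_max_iff_disj LPP_ge_chain)
    next
      case True
      then obtain ys where ys: "xs = ys @ [?p]" "ys \<in> box_chains Q0 (z,0) (x0,t0)"
        using box_chain_through_corner[OF xs _ p dist] by blast
      then have "ereal (sum_list (map snd ys)) + ereal w \<le> LPP Q0 (z,0) (x0,t0) + ereal w"
        by (intro add_right_mono LPP_ge_chain)
      then show ?thesis using ys(1) by (simp add: le_max_iff_disj)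
    qed
  qed
  have "LPP Q0 (z,0) (x0,t0) + ereal w
      = (SUP ys \<in> box_chains Q0 (z,0) (x0,t0). ereal (sum_list (map snd ys)) + ereal w)"
    unfolding LPP_eq_SUP_box_chains
    by (rule SUP_ereal_add_left[symmetric]) (use Nil_in_box_chains[of Q0 "(z,0)" "(x0,t0)"] in auto)
  also have "\<dots> \<le> LPP ?Q (z,0) (x,t0)"
  proof (rule SUP_least)
    fix ys assume "ys \<in> box_chains Q0 (z,0) (x0,t0)"
    then have "ereal (sum_list (map snd (ys @ [?p]))) \<le> LPP ?Q (z,0) (x,t0)"
      by (intro LPP_ge_chain snoc_corner_box_chain dist zx t0)
    then show "ereal (sum_list (map snd ys)) + ereal w \<le> LPP ?Q (z,0) (x,t0)" by simp
  qed
  finally show "max (LPP Q0 (z,0) (x,t0)) (LPP Q0 (z,0) (x0,t0) + ereal w) \<le> LPP ?Q (z,0) (x,t0)"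
    using LPP_mono[of Q0 ?Q "(z,0)" "(z,0)" "(x,t0)" "(x,t0)"] by auto
qed

section \<open>Regular configurations\<close>

definition regular_config :: "real measure \<Rightarrow> mconf \<Rightarrow> bool" where
  "regular_config \<nu> Q \<longleftrightarrow>
    (\<forall>n::nat. finite {a\<in>Q. \<bar>fst (fst a)\<bar> \<le> real n \<and> \<bar>snd (fst a)\<bar> \<le> real n}) \<and>
    (\<forall>a\<in>Q. 0 < snd a) \<and>
    (\<forall>a\<in>Q. \<forall>b\<in>Q. 0 < snd (fst a) \<longrightarrow> 0 < snd (fst b) \<longrightarrow> a \<noteq> b \<longrightarrow>
        fst (fst a) \<noteq> fst (fst b) \<and> snd (fst a) \<noteq> snd (fst b)) \<and>
    (\<forall>a\<in>Q. 0 < snd (fst a) \<longrightarrow> emeasure \<nu> {fst (fst a)} = 0) \<and>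
    (\<forall>T::nat. \<forall>e>0. \<exists>R. \<forall>r\<ge>R. LPP Q (-r,0) (r, real T) \<le> ereal (e * r))"

lemma regular_configD:
  assumes "regular_config \<nu> Q"
  shows "finite {a\<in>Q. \<bar>fst (fst a)\<bar> \<le> real n \<and> \<bar>snd (fst a)\<bar> \<le> real n}"
    and "a \<in> Q \<Longrightarrow> 0 < snd a"
    and "a \<in> Q \<Longrightarrow> b \<in> Q \<Longrightarrow> 0 < snd (fst a) \<Longrightarrow> 0 < snd (fst b) \<Longrightarrow> a \<noteq> b \<Longrightarrow>
           fst (fst a) \<noteq> fst (fst b) \<and> snd (fst a) \<noteq> snd (fst b)"
    and "a \<in> Q \<Longrightarrow> 0 < snd (fst a) \<Longrightarrow> emeasure \<nu> {fst (fst a)} = 0"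
    and "0 < e \<Longrightarrow> \<exists>R. \<forall>r\<ge>R. LPP Q (-r,0) (r, real T) \<le> ereal (e * r)"
  using assms unfolding regular_config_def by simp_all

lemma regular_config_subset:
  assumes "regular_config \<nu> Q" "Q0 \<subseteq> Q"
  shows "regular_config \<nu> Q0"
  unfolding regular_config_def
proof (intro conjI)
  show "\<forall>n::nat. finite {a\<in>Q0. \<bar>fst (fst a)\<bar> \<le> real n \<and> \<bar>snd (fst a)\<bar> \<le> real n}"
  proof
    fix n :: nat
    show "finite {a\<in>Q0. \<bar>fst (fst a)\<bar> \<le> real n \<and> \<bar>snd (fst a)\<bar> \<le> real n}"
      by (rule finite_subset[of _ "{a\<in>Q. \<bar>fst (fst a)\<bar> \<le> real n \<and> \<bar>snd (fst a)\<bar> \<le> real n}"])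
         (use assms in \<open>auto simp: regular_config_def\<close>)
  qed
  show "\<forall>a\<in>Q0. 0 < snd a"
    and "\<forall>a\<in>Q0. \<forall>b\<in>Q0. 0 < snd (fst a) \<longrightarrow> 0 < snd (fst b) \<longrightarrow> a \<noteq> b \<longrightarrow>
          fst (fst a) \<noteq> fst (fst b) \<and> snd (fst a) \<noteq> snd (fst b)"
    and "\<forall>a\<in>Q0. 0 < snd (fst a) \<longrightarrow> emeasure \<nu> {fst (fst a)} = 0"
    using assms unfolding regular_config_def by blast+
  show "\<forall>T::nat. \<forall>e>0. \<exists>R. \<forall>r\<ge>R. LPP Q0 (-r,0) (r, real T) \<le> ereal (e * r)"
  proof (intro allI impI)
    fix T :: nat and e :: real assume "0 < e"
    then obtain R where R: "\<forall>r\<ge>R. LPP Q (-r,0) (r, real T) \<le> ereal (e * r)"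
      using assms(1) unfolding regular_config_def by blast
    have "LPP Q0 (-r,0) (r, real T) \<le> LPP Q (-r,0) (r, real T)" for r
      using assms(2) by (intro LPP_mono) auto
    with R show "\<exists>R. \<forall>r\<ge>R. LPP Q0 (-r,0) (r, real T) \<le> ereal (e * r)"
      by (meson order_trans)
  qed
qed

lemma regular_config_finite_box_points:
  assumes "regular_config \<nu> Q"
  shows "finite (box_points Q p q)"
proof -
  obtain n :: nat where n: "\<bar>fst p\<bar> + \<bar>fst q\<bar> + \<bar>snd p\<bar> + \<bar>snd q\<bar> \<le> real n"
    using real_arch_simple by blast
  have "box_points Q p q \<subseteq> {a\<in>Q. \<bar>fst (fst a)\<bar> \<le> real n \<and> \<bar>snd (fst a)\<bar> \<le> real n}"
    using n by (auto simp: box_points_def in_box_def)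
  moreover have "finite {a\<in>Q. \<bar>fst (fst a)\<bar> \<le> real n \<and> \<bar>snd (fst a)\<bar> \<le> real n}"
    using assms by (auto simp: regular_config_def)
  ultimately show ?thesis by (rule finite_subset)
qed

lemma Lnu_ge_term: "z \<le> x \<Longrightarrow> ereal (nuF \<nu> z) + LPP Q (z,0) (x,t) \<le> Lnu Q \<nu> x t"
  unfolding Lnu_def by (rule SUP_upper) simp

lemma nuF_le_Lnu: "ereal (nuF \<nu> x) \<le> Lnu Q \<nu> x t"
proof -
  have "ereal (nuF \<nu> x) \<le> ereal (nuF \<nu> x) + LPP Q (x,0) (x,t)"
    using LPP_nonneg[of Q "(x,0)" "(x,t)"] by (simp add: add_increasing2)
  also have "\<dots> \<le> Lnu Q \<nu> x t" by (rule Lnu_ge_term) simp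
  finally show ?thesis .
qed

lemma Lnu_mono:
  assumes "x \<le> y"
  shows "Lnu Q \<nu> x t \<le> Lnu Q \<nu> y t"
  unfolding Lnu_def[of Q \<nu> x t]
proof (rule SUP_least)
  fix z assume z: "z \<in> {..x}"
  have "ereal (nuF \<nu> z) + LPP Q (z,0) (x,t) \<le> ereal (nuF \<nu> z) + LPP Q (z,0) (y,t)"
    using assms by (intro add_left_mono LPP_mono) auto
  also have "\<dots> \<le> Lnu Q \<nu> y t" using z assms by (intro Lnu_ge_term) auto
  finally show "ereal (nuF \<nu> z) + LPP Q (z,0) (x,t) \<le> Lnu Q \<nu> y t" .
qed

text \<open>
  Far to the left, \<open>\<nu>(z) \<le> c z\<close> beats the sublinear growth \<open>L((z,0),(x,t)) \<le> c |z| / 2\<close>, so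
  only a bounded range of \<open>z\<close> matters in the supremum.
\<close>

lemma Lnu_less_infinity:
  assumes N: "\<nu> \<in> calN" and G: "regular_config \<nu> Q"
  shows "Lnu Q \<nu> x t < \<infinity>"
proof -
  have lf: "locally_finite_borel \<nu>" by (rule calN_locally_finite_borel[OF N])
  obtain c K where c: "0 < c" and K: "\<And>y. y \<le> K \<Longrightarrow> nuF \<nu> y \<le> c * y"
    using calN_linear_upper_bound[OF N] by blast
  obtain T :: nat where T: "t \<le> real T" using real_arch_simple by blast
  obtain R where R: "\<And>r. r \<ge> R \<Longrightarrow> LPP Q (-r,0) (r, real T) \<le> ereal (c / 2 * r)"
    using G c unfolding regular_config_def by (meson half_gt_zero)
  define D where "D = max (max R \<bar>x\<bar>) (- K) + 1"
  define B where "B = max 0 (ereal (nuF \<nu> x) + LPP Q (-D,0) (x,t))"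
  have "Lnu Q \<nu> x t \<le> B"
    unfolding Lnu_def
  proof (rule SUP_least)
    fix z assume z: "z \<in> {..x}"
    show "ereal (nuF \<nu> z) + LPP Q (z,0) (x,t) \<le> B"
    proof (cases "z \<le> - D")
      case True
      have "LPP Q (z,0) (x,t) \<le> LPP Q (-\<bar>z\<bar>,0) (\<bar>z\<bar>, real T)"
        by (rule LPP_mono) (use True T D_def in auto)
      also have "\<dots> \<le> ereal (c / 2 * \<bar>z\<bar>)" by (rule R) (use True D_def in auto)
      finally have "ereal (nuF \<nu> z) + LPP Q (z,0) (x,t) \<le> ereal (nuF \<nu> z) + ereal (c / 2 * \<bar>z\<bar>)"
        by (rule add_left_mono)
      also have "\<dots> \<le> 0"
      proof -
        have "nuF \<nu> z \<le> c * z" "z < 0" using K True D_def by auto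
        then have "nuF \<nu> z + c / 2 * \<bar>z\<bar> \<le> 0"
          using mult_pos_neg[OF c, of z] by (simp add: abs_if algebra_simps)
        then show ?thesis by simp
      qed
      also have "\<dots> \<le> B" unfolding B_def by simp
      finally show ?thesis .
    next
      case False
      have "nuF \<nu> z \<le> nuF \<nu> x" using nuF_mono[OF lf] z by auto
      moreover have "LPP Q (z,0) (x,t) \<le> LPP Q (-D,0) (x,t)" by (rule LPP_mono) (use False in auto)
      ultimately have "ereal (nuF \<nu> z) + LPP Q (z,0) (x,t) \<le> ereal (nuF \<nu> x) + LPP Q (-D,0) (x,t)"
        by (intro add_mono) auto
      then show ?thesis unfolding B_def by (rule order_trans[OF _ max.cobounded2])
    qed
  qed
  also have "B < \<infinity>"
    using LPP_finite[OF regular_config_finite_box_points[OF G], of "(-D,0)" "(x,t)"] unfolding B_def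
    by (cases "LPP Q (-D,0) (x,t)") (auto simp: max_def zero_ereal_def)
  finally show ?thesis .
qed

lemma Lnu_finite:
  assumes "\<nu> \<in> calN" "regular_config \<nu> Q"
  shows "\<bar>Lnu Q \<nu> x t\<bar> \<noteq> \<infinity>"
  using Lnu_less_infinity[OF assms, of x t] nuF_le_Lnu[of \<nu> x Q t] by auto

definition Lnu_real :: "mconf \<Rightarrow> real measure \<Rightarrow> real \<Rightarrow> real \<Rightarrow> real" where
  "Lnu_real Q \<nu> t x = real_of_ereal (Lnu Q \<nu> x t)"

lemma Lnu_eq_Lnu_real:
  assumes "\<nu> \<in> calN" "regular_config \<nu> Q"
  shows "Lnu Q \<nu> x t = ereal (Lnu_real Q \<nu> t x)"
  unfolding Lnu_real_def using Lnu_finite[OF assms, of x t] by (simp add: ereal_real')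

lemma Lnu_real_mono:
  assumes "\<nu> \<in> calN" "regular_config \<nu> Q" "x \<le> y"
  shows "Lnu_real Q \<nu> t x \<le> Lnu_real Q \<nu> t y"
  using Lnu_mono[OF assms(3), of Q \<nu> t] unfolding Lnu_eq_Lnu_real[OF assms(1,2)] by simp

lemma nuF_le_Lnu_real:
  assumes "\<nu> \<in> calN" "regular_config \<nu> Q"
  shows "nuF \<nu> x \<le> Lnu_real Q \<nu> t x"
  using nuF_le_Lnu[of \<nu> x Q t] unfolding Lnu_eq_Lnu_real[OF assms] by simp

lemma regular_config_empty_box_right:
  assumes G: "regular_config \<nu> Q"
  obtains \<delta> where "0 < \<delta>" "\<And>y. y < x + \<delta> \<Longrightarrow> box_points Q (x,0) (y,t) = {}"
proof -
  define S where "S = box_points Q (x,0) (x + 1,t)"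
  have fin: "finite S" unfolding S_def by (rule regular_config_finite_box_points[OF G])
  define \<delta> where "\<delta> = Min (insert 1 ((\<lambda>a. fst (fst a) - x) ` S))"
  have "0 < \<delta>" unfolding \<delta>_def using fin by (auto simp: S_def box_points_def in_box_def)
  moreover have "box_points Q (x,0) (y,t) = {}" if "y < x + \<delta>" for y
  proof (rule ccontr)
    assume "box_points Q (x,0) (y,t) \<noteq> {}"
    then obtain a where a: "a \<in> Q" "in_box (x,0) (y,t) a" unfolding box_points_def by auto
    have "\<delta> \<le> 1" unfolding \<delta>_def using fin by simp
    then have "a \<in> S" using a that by (auto simp: S_def box_points_def in_box_def)
    then have "\<delta> \<le> fst (fst a) - x" unfolding \<delta>_def using fin by (intro Min_le) auto
    then show False using a(2) that by (simp add: in_box_def)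
  qed
  ultimately show ?thesis by (rule that)
qed

lemma Lnu_eq_max_if_empty_box:
  assumes lf: "locally_finite_borel \<nu>" and empty: "box_points Q (x,0) (y,t) = {}" and "x \<le> y"
  shows "Lnu Q \<nu> y t = max (Lnu Q \<nu> x t) (ereal (nuF \<nu> y))"
proof (rule antisym)
  show "Lnu Q \<nu> y t \<le> max (Lnu Q \<nu> x t) (ereal (nuF \<nu> y))"
    unfolding Lnu_def[of Q \<nu> y t]
  proof (rule SUP_least)
    fix z assume z: "z \<in> {..y}"
    show "ereal (nuF \<nu> z) + LPP Q (z,0) (y,t) \<le> max (Lnu Q \<nu> x t) (ereal (nuF \<nu> y))"
    proof (cases "z \<le> x")
      case True
      have "box_points Q (z,0) (y,t) = box_points Q (z,0) (x,t)"
        using empty True \<open>x \<le> y\<close> unfolding box_points_def in_box_def by fastforce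
      then have "LPP Q (z,0) (y,t) = LPP Q (z,0) (x,t)" by (rule LPP_cong_box_points)
      then show ?thesis using Lnu_ge_term[OF True, of \<nu> Q t] by (simp add: le_max_iff_disj)
    next
      case False
      have "box_points Q (z,0) (y,t) \<subseteq> box_points Q (x,0) (y,t)"
        using False by (intro box_points_mono) auto
      then have "LPP Q (z,0) (y,t) = 0" using empty by (intro LPP_empty_box) auto
      moreover have "nuF \<nu> z \<le> nuF \<nu> y" using nuF_mono[OF lf] z by auto
      ultimately show ?thesis by (simp add: le_max_iff_disj)
    qed
  qed
  show "max (Lnu Q \<nu> x t) (ereal (nuF \<nu> y)) \<le> Lnu Q \<nu> y t"
    using Lnu_mono[OF \<open>x \<le> y\<close>, of Q \<nu> t] nuF_le_Lnu[of \<nu> y Q t] by simp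
qed

lemma Lnu_real_right_continuous:
  assumes N: "\<nu> \<in> calN" and G: "regular_config \<nu> Q"
  shows "continuous (at_right x) (Lnu_real Q \<nu> t)"
proof -
  have lf: "locally_finite_borel \<nu>" by (rule calN_locally_finite_borel[OF N])
  obtain \<delta> where \<delta>: "0 < \<delta>" "\<And>y. y < x + \<delta> \<Longrightarrow> box_points Q (x,0) (y,t) = {}"
    using regular_config_empty_box_right[OF G] by blast
  have "eventually (\<lambda>y. max (Lnu_real Q \<nu> t x) (nuF \<nu> y) = Lnu_real Q \<nu> t y) (at_right x)"
    unfolding eventually_at_right_field
  proof (intro exI[of _ "x + \<delta>"] conjI allI impI)
    fix y assume "x < y" "y < x + \<delta>"
    then have "Lnu Q \<nu> y t = max (Lnu Q \<nu> x t) (ereal (nuF \<nu> y))"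
      using \<delta>(2) by (intro Lnu_eq_max_if_empty_box[OF lf]) auto
    then show "max (Lnu_real Q \<nu> t x) (nuF \<nu> y) = Lnu_real Q \<nu> t y"
      unfolding Lnu_eq_Lnu_real[OF N G] by (simp add: max_def split: if_splits)
  qed (use \<delta> in simp)
  moreover have "((\<lambda>y. max (Lnu_real Q \<nu> t x) (nuF \<nu> y)) \<longlongrightarrow> Lnu_real Q \<nu> t x) (at_right x)"
  proof -
    have "((\<lambda>y. max (Lnu_real Q \<nu> t x) (nuF \<nu> y))
            \<longlongrightarrow> max (Lnu_real Q \<nu> t x) (nuF \<nu> x)) (at_right x)"
      using nuF_right_continuous[OF lf, of x] unfolding continuous_within
      by (intro tendsto_max tendsto_const)
    then show ?thesis using nuF_le_Lnu_real[OF N G, of x t] by (simp add: max_absorb1)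
  qed
  ultimately show ?thesis
    unfolding continuous_within by (rule Lim_transform_eventually[rotated])
qed

lemma is_M_interval_measure:
  assumes N: "\<nu> \<in> calN" and G: "regular_config \<nu> Q"
  shows "is_M Q \<nu> t (interval_measure (Lnu_real Q \<nu> t))"
proof -
  have mono: "\<And>x y. x \<le> y \<Longrightarrow> Lnu_real Q \<nu> t x \<le> Lnu_real Q \<nu> t y"
    by (rule Lnu_real_mono[OF N G])
  have rc: "\<And>a. continuous (at_right a) (Lnu_real Q \<nu> t)"
    by (rule Lnu_real_right_continuous[OF N G])
  show ?thesis
    unfolding is_M_def Lnu_eq_Lnu_real[OF N G]
    by (simp add: emeasure_interval_measure_Ioc_eq[OF mono rc]
        measure_interval_measure_Ioc[OF _ mono rc])
qed

lemma is_M_locally_finite_borel: "is_M Q \<nu> t m \<Longrightarrow> locally_finite_borel m"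
  by (simp add: is_M_def locally_finite_borel_def)

lemma is_M_unique:
  assumes m1: "is_M Q \<nu> t m1" and m2: "is_M Q \<nu> t m2"
  shows "m1 = m2"
proof (rule locally_finite_borel_eqI[OF is_M_locally_finite_borel[OF m1]])
  show "sets m2 = sets borel" using m2 by (simp add: is_M_def)
  fix a b :: real
  show "emeasure m1 {a<..b} = emeasure m2 {a<..b}"
  proof (cases "a \<le> b")
    case True
    then have "measure m1 {a<..b} = measure m2 {a<..b}"
      using m1 m2 unfolding is_M_def by (metis ereal.inject)
    then show ?thesis
      using locally_finite_borel_emeasure_Ioc is_M_locally_finite_borel m1 m2 by metis
  qed simp
qed

lemma Mt_eqI: "is_M Q \<nu> t m \<Longrightarrow> Mt Q \<nu> t = m"
  unfolding Mt_def using is_M_unique by blast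

lemma Mt_is_M:
  assumes "\<nu> \<in> calN" "regular_config \<nu> Q"
  shows "is_M Q \<nu> t (Mt Q \<nu> t)"
  using is_M_interval_measure[OF assms] Mt_eqI[OF is_M_interval_measure[OF assms]] by simp

lemma Lnu_time_zero:
  assumes "locally_finite_borel \<nu>"
  shows "Lnu Q \<nu> x 0 = ereal (nuF \<nu> x)"
proof (rule antisym)
  show "Lnu Q \<nu> x 0 \<le> ereal (nuF \<nu> x)"
    unfolding Lnu_def
  proof (rule SUP_least)
    fix z assume "z \<in> {..x}"
    then show "ereal (nuF \<nu> z) + LPP Q (z,0) (x,0) \<le> ereal (nuF \<nu> x)"
      using LPP_flat_box[of "(x,0)" "(z,0)" Q] nuF_mono[OF assms, of z x] by simp
  qed
qed (rule nuF_le_Lnu)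

lemma Mt_time_zero:
  assumes "\<nu> \<in> calN"
  shows "Mt Q \<nu> 0 = \<nu>"
proof (rule Mt_eqI)
  have lf: "locally_finite_borel \<nu>" by (rule calN_locally_finite_borel[OF assms])
  then show "is_M Q \<nu> 0 \<nu>"
    by (simp add: is_M_def Lnu_time_zero nuF_diff locally_finite_borel_def)
qed

lemma is_M_measure_Ioc:
  assumes "\<nu> \<in> calN" "regular_config \<nu> Q" "is_M Q \<nu> t m" "x \<le> y"
  shows "measure m {x<..y} = Lnu_real Q \<nu> t y - Lnu_real Q \<nu> t x"
  using assms(3,4) unfolding is_M_def Lnu_eq_Lnu_real[OF assms(1,2)] by simp

section \<open>Removing a point\<close>

lemma Lnu_eq_SUP_lessThan:
  assumes lf: "locally_finite_borel \<nu>" and atom: "emeasure \<nu> {x} = 0"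
  shows "Lnu Q \<nu> x t = (SUP z\<in>{..<x}. ereal (nuF \<nu> z) + LPP Q (z,0) (x,t))"
    (is "_ = ?S")
proof (rule antisym)
  have "ereal (nuF \<nu> x) \<le> ?S"
  proof (rule ccontr)
    assume "\<not> ereal (nuF \<nu> x) \<le> ?S"
    then have less: "?S < ereal (nuF \<nu> x)" by simp
    have lower: "ereal (nuF \<nu> z) \<le> ?S" if "z < x" for z
    proof -
      have "ereal (nuF \<nu> z) \<le> ereal (nuF \<nu> z) + LPP Q (z,0) (x,t)"
        using LPP_nonneg[of Q "(z,0)" "(x,t)"] by (simp add: add_increasing2)
      also have "\<dots> \<le> ?S" using that by (intro SUP_upper) auto
      finally show ?thesis .
    qed
    obtain s where s: "?S = ereal s"
      using less lower[of "x - 1"] by (cases ?S) auto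
    obtain z where "z < x" "nuF \<nu> x - (nuF \<nu> x - s) < nuF \<nu> z"
      using nuF_left_approx_at_nonatom[OF lf atom, of "nuF \<nu> x - s"] less s by auto
    then show False using lower[of z] s by simp
  qed
  moreover have "LPP Q (x,0) (x,t) = 0" by (rule LPP_empty_box) (auto simp: box_points_def in_box_def)
  ultimately show "Lnu Q \<nu> x t \<le> ?S"
    unfolding Lnu_def[of Q \<nu> x t]
  proof (intro SUP_least)
    fix z assume "z \<in> {..x}"
    then consider "z < x" | "z = x" by fastforce
    then show "ereal (nuF \<nu> z) + LPP Q (z,0) (x,t) \<le> ?S"
    proof cases
      case 1
      then show ?thesis by (intro SUP_upper) simp
    qed (use \<open>ereal (nuF \<nu> x) \<le> ?S\<close> \<open>LPP Q (x,0) (x,t) = 0\<close> in simp)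
  qed
  show "?S \<le> Lnu Q \<nu> x t"
    unfolding Lnu_def by (rule SUP_subset_mono) auto
qed

context
  fixes \<nu> :: "real measure" and Q :: mconf and x0 t0 w :: real
  assumes N: "\<nu> \<in> calN" and G: "regular_config \<nu> Q" and p: "((x0,t0),w) \<in> Q" and t0: "0 < t0"
  fixes Q0 :: mconf
  defines "Q0 \<equiv> Q - {((x0,t0),w)}"
begin

lemma regular_config_removed: "regular_config \<nu> Q0"
  unfolding Q0_def by (rule regular_config_subset[OF G]) auto

lemma removed_weight_pos: "0 < w"
  using regular_configD(2)[OF G p] by simp

lemma removed_coordinates_unique: "\<forall>a\<in>Q0. 0 < snd (fst a) \<longrightarrow> fst (fst a) \<noteq> x0 \<and> snd (fst a) \<noteq> t0"
proof (intro ballI impI)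
  fix a assume a: "a \<in> Q0" "0 < snd (fst a)"
  then show "fst (fst a) \<noteq> x0 \<and> snd (fst a) \<noteq> t0"
    using regular_configD(3)[OF G _ p] t0 unfolding Q0_def by fastforce
qed

lemma removed_point_no_atom: "emeasure \<nu> {x0} = 0"
  using regular_configD(4)[OF G p] t0 by simp

lemma Lnu_remove_left:
  assumes "x < x0"
  shows "Lnu Q \<nu> x t0 = Lnu Q0 \<nu> x t0"
  unfolding Lnu_def
proof (rule SUP_cong[OF refl])
  fix z assume "z \<in> {..x}"
  have "box_points Q (z,0) (x,t0) = box_points Q0 (z,0) (x,t0)"
    using assms unfolding Q0_def box_points_def in_box_def by auto
  then have "LPP Q (z,0) (x,t0) = LPP Q0 (z,0) (x,t0)" by (rule LPP_cong_box_points)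
  then show "ereal (nuF \<nu> z) + LPP Q (z,0) (x,t0) = ereal (nuF \<nu> z) + LPP Q0 (z,0) (x,t0)"
    by simp
qed

lemma LPP_remove_before_point:
  assumes "z < x0" "x0 \<le> x"
  shows "LPP Q (z,0) (x,t0) = max (LPP Q0 (z,0) (x,t0)) (LPP Q0 (z,0) (x0,t0) + ereal w)"
proof -
  have "insert ((x0,t0),w) Q0 = Q" using p unfolding Q0_def by auto
  moreover have "LPP (insert ((x0,t0),w) Q0) (z,0) (x,t0)
      = max (LPP Q0 (z,0) (x,t0)) (LPP Q0 (z,0) (x0,t0) + ereal w)"
    by (rule LPP_insert_corner[OF _ removed_coordinates_unique assms t0]) (simp add: Q0_def)
  ultimately show ?thesis by simp
qed

lemma LPP_remove_after_point: "x0 \<le> z \<Longrightarrow> LPP Q (z,0) (x,t0) = LPP Q0 (z,0) (x,t0)"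
  by (rule LPP_cong_box_points) (auto simp: Q0_def box_points_def in_box_def)

lemma Lnu_remove_right:
  assumes x: "x0 \<le> x"
  shows "Lnu Q \<nu> x t0 = max (Lnu Q0 \<nu> x t0) (Lnu Q0 \<nu> x0 t0 + ereal w)"
proof -
  let ?S = "SUP z\<in>{..<x0}. ereal (nuF \<nu> z) + LPP Q0 (z,0) (x0,t0)"
  have S: "Lnu Q0 \<nu> x0 t0 = ?S"
    by (rule Lnu_eq_SUP_lessThan[OF calN_locally_finite_borel[OF N] removed_point_no_atom])
  have upper: "Lnu Q \<nu> x t0 \<le> max (Lnu Q0 \<nu> x t0) (?S + ereal w)"
    unfolding Lnu_def[of Q \<nu> x t0]
  proof (rule SUP_least)
    fix z assume z: "z \<in> {..x}"
    have Q0_term: "ereal (nuF \<nu> z) + LPP Q0 (z,0) (x,t0) \<le> Lnu Q0 \<nu> x t0"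
      using z by (intro Lnu_ge_term) auto
    show "ereal (nuF \<nu> z) + LPP Q (z,0) (x,t0) \<le> max (Lnu Q0 \<nu> x t0) (?S + ereal w)"
    proof (cases "z < x0")
      case True
      have "ereal (nuF \<nu> z) + LPP Q0 (z,0) (x0,t0) \<le> ?S"
        using True by (intro SUP_upper) auto
      then have "ereal (nuF \<nu> z) + (LPP Q0 (z,0) (x0,t0) + ereal w) \<le> ?S + ereal w"
        by (simp add: add.assoc[symmetric] add_right_mono)
      then show ?thesis unfolding LPP_remove_before_point[OF True x]
        using Q0_term by (auto simp: max_def intro: order_trans add_left_mono)
    next
      case False
      then show ?thesis using Q0_term LPP_remove_after_point[of z x] by (simp add: le_max_iff_disj)
    qed
  qed
  have "Lnu Q0 \<nu> x t0 \<le> Lnu Q \<nu> x t0"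
    unfolding Lnu_def Q0_def by (intro SUP_mono) (auto intro!: add_left_mono LPP_mono)
  moreover have "?S + ereal w \<le> Lnu Q \<nu> x t0"
  proof -
    have "?S + ereal w = (SUP z\<in>{..<x0}. ereal (nuF \<nu> z) + LPP Q0 (z,0) (x0,t0) + ereal w)"
      by (rule SUP_ereal_add_left[symmetric]) auto
    also have "\<dots> \<le> Lnu Q \<nu> x t0"
    proof (rule SUP_least)
      fix z assume z: "z \<in> {..<x0}"
      have "ereal (nuF \<nu> z) + LPP Q0 (z,0) (x0,t0) + ereal w \<le> ereal (nuF \<nu> z) + LPP Q (z,0) (x,t0)"
        using z LPP_remove_before_point[of z x] x by (simp add: add.assoc add_left_mono)
      also have "\<dots> \<le> Lnu Q \<nu> x t0" using z x by (intro Lnu_ge_term) auto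
      finally show "ereal (nuF \<nu> z) + LPP Q0 (z,0) (x0,t0) + ereal w \<le> Lnu Q \<nu> x t0" .
    qed
    finally show ?thesis .
  qed
  ultimately show ?thesis unfolding S by (intro antisym[OF upper]) simp
qed

lemma Lnu_real_remove_left: "x < x0 \<Longrightarrow> Lnu_real Q \<nu> t0 x = Lnu_real Q0 \<nu> t0 x"
  unfolding Lnu_real_def using Lnu_remove_left by simp

lemma Lnu_real_remove_right:
  "x0 \<le> x \<Longrightarrow> Lnu_real Q \<nu> t0 x = max (Lnu_real Q0 \<nu> t0 x) (Lnu_real Q0 \<nu> t0 x0 + w)"
  using Lnu_remove_right[of x]
  unfolding Lnu_eq_Lnu_real[OF N G] Lnu_eq_Lnu_real[OF N regular_config_removed]
  by (simp add: max_def split: if_splits)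

lemma Mt_remove_left:
  assumes "A \<in> sets borel" "A \<subseteq> {..<x0}"
  shows "emeasure (Mt Q \<nu> t0) A = emeasure (Mt Q0 \<nu> t0) A"
proof -
  have I1: "is_M Q \<nu> t0 (Mt Q \<nu> t0)" by (rule Mt_is_M[OF N G])
  have I0: "is_M Q0 \<nu> t0 (Mt Q0 \<nu> t0)" by (rule Mt_is_M[OF N regular_config_removed])
  show ?thesis
  proof (rule emeasure_eq_on_lessThan[OF is_M_locally_finite_borel[OF I1]
        is_M_locally_finite_borel[OF I0] _ assms])
    fix a b :: real assume "b < x0"
    show "emeasure (Mt Q \<nu> t0) {a<..b} = emeasure (Mt Q0 \<nu> t0) {a<..b}"
    proof (cases "a \<le> b")
      case True
      then have "measure (Mt Q \<nu> t0) {a<..b} = measure (Mt Q0 \<nu> t0) {a<..b}"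
        using is_M_measure_Ioc[OF N G I1 True] is_M_measure_Ioc[OF N regular_config_removed I0 True]
          Lnu_real_remove_left[of a] Lnu_real_remove_left[of b] \<open>b < x0\<close> by simp
      then show ?thesis
        by (simp add: locally_finite_borel_emeasure_Ioc[OF is_M_locally_finite_borel[OF I1]]
            locally_finite_borel_emeasure_Ioc[OF is_M_locally_finite_borel[OF I0]])
    qed simp
  qed
qed

lemma Mt_remove_atom:
  "emeasure (Mt Q \<nu> t0) {x0} = emeasure (Mt Q0 \<nu> t0) {x0} + ennreal w"
proof -
  have I1: "is_M Q \<nu> t0 (Mt Q \<nu> t0)" by (rule Mt_is_M[OF N G])
  have I0: "is_M Q0 \<nu> t0 (Mt Q0 \<nu> t0)" by (rule Mt_is_M[OF N regular_config_removed])
  note lf1 = is_M_locally_finite_borel[OF I1] and lf0 = is_M_locally_finite_borel[OF I0]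
  have step: "measure (Mt Q \<nu> t0) {x0 - 1 / Suc n<..x0}
      = measure (Mt Q0 \<nu> t0) {x0 - 1 / Suc n<..x0} + w" for n
  proof -
    have lt: "x0 - 1 / Suc n < x0" by simp
    then have le: "x0 - 1 / Suc n \<le> x0" by linarith
    show ?thesis
      using is_M_measure_Ioc[OF N G I1 le] is_M_measure_Ioc[OF N regular_config_removed I0 le]
        Lnu_real_remove_left[OF lt] Lnu_real_remove_right[of x0] removed_weight_pos
      by simp
  qed
  have "(\<lambda>n. measure (Mt Q \<nu> t0) {x0 - 1 / Suc n<..x0}) \<longlonglongrightarrow> measure (Mt Q \<nu> t0) {x0}"
    by (rule measure_Ioc_shrink_to_atom[OF lf1])
  moreover have "(\<lambda>n. measure (Mt Q0 \<nu> t0) {x0 - 1 / Suc n<..x0} + w)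
      \<longlonglongrightarrow> measure (Mt Q0 \<nu> t0) {x0} + w"
    by (intro tendsto_add measure_Ioc_shrink_to_atom[OF lf0] tendsto_const)
  ultimately have "measure (Mt Q \<nu> t0) {x0} = measure (Mt Q0 \<nu> t0) {x0} + w"
    unfolding step by (rule LIMSEQ_unique)
  then show ?thesis
    using removed_weight_pos by (simp add: locally_finite_borel_emeasure_singleton[OF lf1]
        locally_finite_borel_emeasure_singleton[OF lf0] ennreal_plus)
qed

lemma Mt_remove_right:
  assumes "x0 < x"
  shows "emeasure (Mt Q \<nu> t0) {x0<..x} = ennreal (max (measure (Mt Q0 \<nu> t0) {x0<..x} - w) 0)"
proof -
  have I1: "is_M Q \<nu> t0 (Mt Q \<nu> t0)" by (rule Mt_is_M[OF N G])
  have I0: "is_M Q0 \<nu> t0 (Mt Q0 \<nu> t0)" by (rule Mt_is_M[OF N regular_config_removed])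
  have le: "x0 \<le> x" using assms by simp
  have "measure (Mt Q \<nu> t0) {x0<..x} = max (measure (Mt Q0 \<nu> t0) {x0<..x} - w) 0"
    using is_M_measure_Ioc[OF N G I1 le] is_M_measure_Ioc[OF N regular_config_removed I0 le]
      Lnu_real_remove_right[OF le] Lnu_real_remove_right[of x0] removed_weight_pos
    by (simp add: max_def)
  then show ?thesis
    by (simp add: locally_finite_borel_emeasure_Ioc[OF is_M_locally_finite_borel[OF I1]])
qed

end

lemma regular_config_Hammersley_dynamics:
  assumes N: "\<nu> \<in> calN" and G: "regular_config \<nu> Q"
  shows "(\<forall>x t. 0 \<le> t \<longrightarrow> \<bar>Lnu Q \<nu> x t\<bar> \<noteq> \<infinity>) \<and>
           (\<forall>t\<ge>0. is_M Q \<nu> t (Mt Q \<nu> t)) \<and>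
           Mt Q \<nu> 0 = \<nu> \<and>
           (\<forall>x0 t w. ((x0, t), w) \<in> Q \<and> 0 < t \<longrightarrow>
              (let M1 = Mt Q \<nu> t;
                   Q0 = Q - {((x0, t), w)};
                   M0 = Mt Q0 \<nu> t
               in is_M Q0 \<nu> t M0 \<and>
                  (\<forall>A \<in> sets borel. A \<subseteq> {..<x0} \<longrightarrow> emeasure M1 A = emeasure M0 A) \<and>
                  emeasure M1 {x0} = emeasure M0 {x0} + ennreal w \<and>
                  (\<forall>x > x0. emeasure M1 {x0<..x} = ennreal (max (measure M0 {x0<..x} - w) 0))))"
  unfolding Let_def
proof (intro conjI allI impI ballI)
  fix x0 t w assume pt: "((x0, t), w) \<in> Q \<and> 0 < t"
  show "is_M (Q - {((x0, t), w)}) \<nu> t (Mt (Q - {((x0, t), w)}) \<nu> t)"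
    using pt by (intro Mt_is_M[OF N regular_config_removed[OF N G]]) auto
  show "emeasure (Mt Q \<nu> t) A = emeasure (Mt (Q - {((x0, t), w)}) \<nu> t) A"
    if "A \<in> sets borel" "A \<subseteq> {..<x0}" for A
    using pt that by (intro Mt_remove_left[OF N G]) auto
  show "emeasure (Mt Q \<nu> t) {x0} = emeasure (Mt (Q - {((x0, t), w)}) \<nu> t) {x0} + ennreal w"
    using pt by (intro Mt_remove_atom[OF N G]) auto
  show "emeasure (Mt Q \<nu> t) {x0<..x} = ennreal (max (measure (Mt (Q - {((x0, t), w)}) \<nu> t) {x0<..x} - w) 0)"
    if "x0 < x" for x
    using pt that by (intro Mt_remove_right[OF N G]) auto
qed (use Lnu_finite[OF N G] Mt_is_M[OF N G] Mt_time_zero[OF N] in auto)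

section \<open>Sublinear growth from a dyadic grid\<close>

lemma ceiling_index:
  fixes y :: real and K :: nat
  assumes "0 < y" "y \<le> real K"
  shows "nat (\<lceil>y\<rceil> - 1) < K" "real (nat (\<lceil>y\<rceil> - 1)) < y" "y \<le> real (nat (\<lceil>y\<rceil> - 1)) + 1"
proof -
  have c1: "1 \<le> \<lceil>y\<rceil>" using assms(1) by (simp add: one_le_ceiling)
  have ri: "real (nat (\<lceil>y\<rceil> - 1)) = real_of_int \<lceil>y\<rceil> - 1" using c1 by simp
  have "real_of_int \<lceil>y\<rceil> - 1 < y" "y \<le> real_of_int \<lceil>y\<rceil>" using ceiling_correct[of y] by auto
  moreover have "\<lceil>y\<rceil> \<le> int K" using assms(2) by (simp add: ceiling_le_iff)
  ultimately show "nat (\<lceil>y\<rceil> - 1) < K" "real (nat (\<lceil>y\<rceil> - 1)) < y" "y \<le> real (nat (\<lceil>y\<rceil> - 1)) + 1"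
    using ri c1 by (simp_all add: nat_less_iff)
qed

lemma ceiling_index_mono: "y \<le> y' \<Longrightarrow> nat (\<lceil>y\<rceil> - 1) \<le> nat (\<lceil>y'\<rceil> - 1)"
  by (intro nat_mono diff_right_mono ceiling_mono)

lemma Ioc_grid_index:
  fixes lo x h :: real and N :: nat
  assumes "0 < h" "lo < x" "x \<le> lo + real N * h"
  obtains i where "i < N" "lo + real i * h < x" "x \<le> lo + (real i + 1) * h"
proof -
  have "0 < (x - lo) / h" "(x - lo) / h \<le> real N" using assms by (auto simp: field_simps)
  note I = ceiling_index[OF this]
  show ?thesis
    by (rule that[OF I(1)]) (use I(2,3) assms(1) in \<open>simp_all add: field_simps\<close>)
qed

lemma incr_chain_index_sum_inj:
  fixes f :: "(real \<times> real) \<times> real \<Rightarrow> nat \<times> nat"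
  assumes inc: "incr_chain xs"
    and mono: "\<And>a b. fst (fst a) \<le> fst (fst b) \<Longrightarrow> snd (fst a) \<le> snd (fst b) \<Longrightarrow>
                 fst (f a) \<le> fst (f b) \<and> snd (f a) \<le> snd (f b)"
  shows "inj_on (\<lambda>v. fst v + snd v) (f ` set xs)"
proof (rule inj_onI)
  fix v1 v2 assume "v1 \<in> f ` set xs" "v2 \<in> f ` set xs" and s: "fst v1 + snd v1 = fst v2 + snd v2"
  then obtain a b where ab: "a \<in> set xs" "v1 = f a" "b \<in> set xs" "v2 = f b" by blast
  from incr_chain_comparable[OF inc ab(1,3)] show "v1 = v2"
  proof (elim disjE)
    assume "fst (fst a) \<le> fst (fst b) \<and> snd (fst a) \<le> snd (fst b)"
    then show ?thesis using mono[of a b] s ab by (simp add: prod_eq_iff)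
  next
    assume "fst (fst b) \<le> fst (fst a) \<and> snd (fst b) \<le> snd (fst a)"
    then show ?thesis using mono[of b a] s ab by (simp add: prod_eq_iff)
  qed (use ab in simp)
qed

lemma incr_chain_length_le_grid:
  fixes xs :: "((real \<times> real) \<times> real) list" and lo wd ht :: real and k c :: nat
  assumes inc: "incr_chain xs" and wd: "0 < wd" and ht: "0 < ht"
    and box: "\<forall>a\<in>set xs. lo < fst (fst a) \<and> fst (fst a) \<le> lo + real k * wd \<and>
                          0 < snd (fst a) \<and> snd (fst a) \<le> real k * ht"
    and cell: "\<forall>i<k. \<forall>l<k. card {a\<in>set xs. lo + real i * wd < fst (fst a) \<and>
                  fst (fst a) \<le> lo + (real i + 1) * wd \<and>
                  real l * ht < snd (fst a) \<and> snd (fst a) \<le> (real l + 1) * ht} \<le> c"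
  shows "length xs \<le> 2 * k * c"
proof -
  define ci where "ci a = (nat (\<lceil>(fst (fst a) - lo) / wd\<rceil> - 1), nat (\<lceil>snd (fst a) / ht\<rceil> - 1))"
    for a :: "(real \<times> real) \<times> real"
  have ci: "fst (ci a) < k \<and> snd (ci a) < k \<and>
     lo + real (fst (ci a)) * wd < fst (fst a) \<and> fst (fst a) \<le> lo + (real (fst (ci a)) + 1) * wd \<and>
     real (snd (ci a)) * ht < snd (fst a) \<and> snd (fst a) \<le> (real (snd (ci a)) + 1) * ht"
    if a: "a \<in> set xs" for a
  proof -
    have y: "0 < (fst (fst a) - lo) / wd" "(fst (fst a) - lo) / wd \<le> real k"
      using box a wd by (auto simp: field_simps)
    have z: "0 < snd (fst a) / ht" "snd (fst a) / ht \<le> real k"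
      using box a ht by (auto simp: field_simps)
    note Y = ceiling_index[OF y] and Z = ceiling_index[OF z]
    show ?thesis
      using Y Z wd ht unfolding ci_def by (simp add: field_simps)
  qed
  define V where "V = ci ` set xs"
  have inj: "inj_on (\<lambda>v. fst v + snd v) V"
    unfolding V_def using wd ht
    by (intro incr_chain_index_sum_inj[OF inc])
       (auto simp: ci_def intro!: ceiling_index_mono divide_right_mono)
  have "card V \<le> 2 * k"
  proof -
    have "card V = card ((\<lambda>v. fst v + snd v) ` V)" using card_image[OF inj] by simp
    also have "\<dots> \<le> card {..<2 * k}"
    proof (rule card_mono)
      show "(\<lambda>v. fst v + snd v) ` V \<subseteq> {..<2 * k}" unfolding V_def using ci by force
    qed simp
    finally show ?thesis by simp
  qed
  have "length xs = card (set xs)" using incr_chain_distinct[OF inc] by (simp add: distinct_card)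
  also have "set xs = (\<Union>v\<in>V. {a\<in>set xs. ci a = v})" unfolding V_def by auto
  also have "card \<dots> \<le> (\<Sum>v\<in>V. card {a\<in>set xs. ci a = v})" by (rule card_UN_le) (simp add: V_def)
  also have "\<dots> \<le> (\<Sum>v\<in>V. c)"
  proof (rule sum_mono)
    fix v assume "v \<in> V"
    then obtain a where a: "a \<in> set xs" "v = ci a" unfolding V_def by blast
    let ?C = "{b\<in>set xs. lo + real (fst v) * wd < fst (fst b) \<and> fst (fst b) \<le> lo + (real (fst v) + 1) * wd \<and>
                         real (snd v) * ht < snd (fst b) \<and> snd (fst b) \<le> (real (snd v) + 1) * ht}"
    have "card {b\<in>set xs. ci b = v} \<le> card ?C"
      using ci by (intro card_mono) auto
    also have "\<dots> \<le> c" using cell ci[OF a(1)] a(2) by simp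
    finally show "card {b\<in>set xs. ci b = v} \<le> c" .
  qed
  also have "\<dots> \<le> 2 * k * c" using \<open>card V \<le> 2 * k\<close> by simp
  finally show ?thesis .
qed

lemma LPP_grid_bound:
  fixes Qc :: mconf and lo wd ht s :: real and k c :: nat
  assumes wd: "0 < wd" and ht: "0 < ht" and s: "0 \<le> s"
    and cells: "\<forall>i<k. \<forall>l<k.
        finite (Qc \<inter> ({lo + real i * wd<..lo + (real i + 1) * wd} \<times> {real l * ht<..(real l + 1) * ht}) \<times> UNIV) \<and>
        card (Qc \<inter> ({lo + real i * wd<..lo + (real i + 1) * wd} \<times> {real l * ht<..(real l + 1) * ht}) \<times> UNIV) \<le> c"
    and weights: "\<forall>a\<in>Qc. in_box (lo,0) (lo + real k * wd, real k * ht) a \<longrightarrow> snd a \<le> s"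
  shows "LPP Qc (lo,0) (lo + real k * wd, real k * ht) \<le> ereal (real (2 * k * c) * s)"
proof (rule LPP_leI)
  fix xs assume xs: "xs \<in> box_chains Qc (lo,0) (lo + real k * wd, real k * ht)"
  have inc: "incr_chain xs" and sub: "set xs \<subseteq> Qc"
    and inb: "\<forall>a\<in>set xs. in_box (lo,0) (lo + real k * wd, real k * ht) a"
    using xs unfolding box_chains_def box_points_def by auto
  have len: "length xs \<le> 2 * k * c"
  proof (rule incr_chain_length_le_grid[OF inc wd ht])
    show "\<forall>a\<in>set xs. lo < fst (fst a) \<and> fst (fst a) \<le> lo + real k * wd \<and> 0 < snd (fst a) \<and> snd (fst a) \<le> real k * ht"
      using inb by (auto simp: in_box_def)
    show "\<forall>i<k. \<forall>l<k. card {a\<in>set xs. lo + real i * wd < fst (fst a) \<and> fst (fst a) \<le> lo + (real i + 1) * wd \<and>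
                              real l * ht < snd (fst a) \<and> snd (fst a) \<le> (real l + 1) * ht} \<le> c"
    proof (intro allI impI)
      fix i l assume il: "i < k" "l < k"
      let ?C = "({lo + real i * wd<..lo + (real i + 1) * wd} \<times> {real l * ht<..(real l + 1) * ht}) \<times> (UNIV :: real set)"
      have "card {a\<in>set xs. lo + real i * wd < fst (fst a) \<and> fst (fst a) \<le> lo + (real i + 1) * wd \<and>
                              real l * ht < snd (fst a) \<and> snd (fst a) \<le> (real l + 1) * ht} \<le> card (Qc \<inter> ?C)"
        using sub cells il by (intro card_mono) (auto simp: mem_Times_iff)
      also have "\<dots> \<le> c" using cells il by blast
      finally show "card {a\<in>set xs. lo + real i * wd < fst (fst a) \<and> fst (fst a) \<le> lo + (real i + 1) * wd \<and>
                              real l * ht < snd (fst a) \<and> snd (fst a) \<le> (real l + 1) * ht} \<le> c" .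
    qed
  qed
  have "sum_list (map snd xs) \<le> sum_list (map (\<lambda>_. s) xs)"
    by (rule sum_list_mono) (use weights sub inb in blast)
  also have "\<dots> = real (length xs) * s" by (simp add: sum_list_triv)
  also have "\<dots> \<le> real (2 * k * c) * s"
    using len by (intro mult_right_mono[OF _ s]) (simp only: of_nat_le_iff)
  finally show "ereal (sum_list (map snd xs)) \<le> ereal (real (2 * k * c) * s)" by simp
qed

text \<open>The box \<open>(-4\<^sup>j,4\<^sup>j] \<times> (0,T]\<close> is cut into \<open>2\<^sup>j \<times> 2\<^sup>j\<close> cells of area \<open>2T\<close>.\<close>

definition dyadic_cell :: "nat \<Rightarrow> real \<Rightarrow> nat \<times> nat \<Rightarrow> ((real \<times> real) \<times> real) set" where
  "dyadic_cell j T p =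
     ({- (4 ^ j) + real (fst p) * (2 * 2 ^ j)<..- (4 ^ j) + (real (fst p) + 1) * (2 * 2 ^ j)} \<times>
      {real (snd p) * (T / 2 ^ j)<..(real (snd p) + 1) * (T / 2 ^ j)}) \<times> UNIV"

definition heavy_zone :: "nat \<Rightarrow> real \<Rightarrow> real \<Rightarrow> ((real \<times> real) \<times> real) set" where
  "heavy_zone j T a = ({- (4 ^ j)<..4 ^ j} \<times> {0<..T}) \<times> {4 * j / a<..}"

lemma LPP_dyadic_bound:
  fixes Qc :: mconf and T s :: real and j c :: nat
  assumes T: "0 < T" and s: "0 \<le> s"
    and cells: "\<And>i l. i < 2 ^ j \<Longrightarrow> l < 2 ^ j \<Longrightarrow>
                  finite (Qc \<inter> dyadic_cell j T (i,l)) \<and> card (Qc \<inter> dyadic_cell j T (i,l)) \<le> c"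
    and weights: "\<And>b. b \<in> Qc \<Longrightarrow> in_box (- (4 ^ j), 0) (4 ^ j, T) b \<Longrightarrow> snd b \<le> s"
  shows "LPP Qc (- (4 ^ j), 0) (4 ^ j, T) \<le> ereal (2 * 2 ^ j * c * s)"
proof -
  have right: "- (4 ^ j) + real ((2::nat) ^ j) * (2 * 2 ^ j) = (4 ^ j :: real)"
    by (simp add: power_mult_distrib[symmetric])
  have top: "real ((2::nat) ^ j) * (T / 2 ^ j) = T" by simp
  have "LPP Qc (- (4 ^ j), 0) (- (4 ^ j) + real ((2::nat) ^ j) * (2 * 2 ^ j), real ((2::nat) ^ j) * (T / 2 ^ j))
          \<le> ereal (real (2 * 2 ^ j * c) * s)"
  proof (rule LPP_grid_bound)
    show "\<forall>i<2 ^ j. \<forall>l<2 ^ j.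
        finite (Qc \<inter> ({- (4 ^ j) + real i * (2 * 2 ^ j)<..- (4 ^ j) + (real i + 1) * (2 * 2 ^ j)} \<times>
                      {real l * (T / 2 ^ j)<..(real l + 1) * (T / 2 ^ j)}) \<times> UNIV) \<and>
        card (Qc \<inter> ({- (4 ^ j) + real i * (2 * 2 ^ j)<..- (4 ^ j) + (real i + 1) * (2 * 2 ^ j)} \<times>
                      {real l * (T / 2 ^ j)<..(real l + 1) * (T / 2 ^ j)}) \<times> UNIV) \<le> c"
      using cells unfolding dyadic_cell_def by simp
    show "\<forall>b\<in>Qc. in_box (- (4 ^ j), 0) (- (4 ^ j) + real ((2::nat) ^ j) * (2 * 2 ^ j),
                                        real ((2::nat) ^ j) * (T / 2 ^ j)) b \<longrightarrow> snd b \<le> s"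
      using weights unfolding right top by blast
  qed (use T s in auto)
  then show ?thesis unfolding right top by simp
qed

lemma exists_power_between:
  fixes b r :: real
  assumes "1 < b" "b ^ J \<le> r"
  obtains j where "J \<le> j" "r \<le> b ^ j" "b ^ j \<le> b * r"
proof -
  have ex: "\<exists>j. J \<le> j \<and> r \<le> b ^ j"
  proof -
    obtain n where n: "r < b ^ n" using real_arch_pow[OF assms(1)] by auto
    have "b ^ n \<le> b ^ max J n" using assms(1) by (intro power_increasing) auto
    then show ?thesis using n by (intro exI[of _ "max J n"]) auto
  qed
  define j where "j = (LEAST j. J \<le> j \<and> r \<le> b ^ j)"
  have j: "J \<le> j" "r \<le> b ^ j" using LeastI_ex[OF ex] unfolding j_def by auto
  have "b ^ j \<le> b * r"
  proof (cases "j = J")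
    case True
    have "0 \<le> r" using assms order_trans[OF zero_le_power[of b J]] by simp
    then have "r \<le> b * r" using mult_right_mono[of 1 b r] assms(1) by simp
    then show ?thesis using True j(2) assms(2) by simp
  next
    case False
    then obtain i where i: "j = Suc i" "J \<le> i" using j(1) by (cases j) auto
    then have "\<not> (J \<le> i \<and> r \<le> b ^ i)"
      using not_less_Least[of i "\<lambda>j. J \<le> j \<and> r \<le> b ^ j"] unfolding j_def by auto
    then have "b ^ i < r" using i by auto
    then show ?thesis using i assms(1) by simp
  qed
  with j show ?thesis by (rule that)
qed

lemma LPP_sublinear_of_dyadic_bound:
  fixes Qc :: mconf and C T :: real
  assumes bound: "\<forall>\<^sub>F j in sequentially. LPP Qc (- (4 ^ j), 0) (4 ^ j, T) \<le> ereal (C * real j ^ 2 * 2 ^ j)"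
    and e: "0 < e"
  obtains R where "\<And>r. R \<le> r \<Longrightarrow> LPP Qc (-r,0) (r,T) \<le> ereal (e * r)"
proof -
  have "(\<lambda>j. C * (real j ^ 2 / 2 ^ j)) \<longlonglongrightarrow> 0"
    by (intro tendsto_mult_right_zero) real_asymp
  then have "\<forall>\<^sub>F j in sequentially. C * (real j ^ 2 / 2 ^ j) < e / 4"
    using e by (intro order_tendstoD) auto
  with bound have "\<forall>\<^sub>F j in sequentially. LPP Qc (- (4 ^ j), 0) (4 ^ j, T) \<le> ereal (e / 4 * 4 ^ j)"
  proof eventually_elim
    case (elim j)
    have "(4::real) ^ j = 2 ^ j * 2 ^ j" by (simp flip: power_mult_distrib)
    then have "C * real j ^ 2 * 2 ^ j = C * (real j ^ 2 / 2 ^ j) * 4 ^ j" by simp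
    also have "\<dots> \<le> e / 4 * 4 ^ j" using elim(2) by (intro mult_right_mono) auto
    finally show ?case using elim(1) by (simp add: order_trans)
  qed
  then obtain J where J: "\<And>j. J \<le> j \<Longrightarrow> LPP Qc (- (4 ^ j), 0) (4 ^ j, T) \<le> ereal (e / 4 * 4 ^ j)"
    unfolding eventually_sequentially by blast
  show ?thesis
  proof (rule that)
    fix r :: real assume r: "4 ^ J \<le> r"
    obtain j where j: "J \<le> j" "r \<le> 4 ^ j" "4 ^ j \<le> 4 * r"
      using exists_power_between[of 4 J r] r by auto
    have "LPP Qc (-r,0) (r,T) \<le> LPP Qc (- (4 ^ j), 0) (4 ^ j, T)"
      using j by (intro LPP_mono) auto
    also have "\<dots> \<le> ereal (e / 4 * 4 ^ j)" by (rule J[OF j(1)])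
    also have "e / 4 * 4 ^ j \<le> e * r" using j(3) e by simp
    finally show "LPP Qc (-r,0) (r,T) \<le> ereal (e * r)" by simp
  qed
qed

section \<open>Almost sure regularity of the marked Poisson process\<close>

lemma Poisson_tail_le:
  fixes m :: real assumes "0 \<le> m"
  shows "1 - (\<Sum>k<j. m ^ k / fact k * exp (- m)) \<le> m ^ j / fact j"
proof -
  obtain t where t: "\<bar>t\<bar> \<le> \<bar>m\<bar>" "exp m = (\<Sum>k<j. m ^ k / fact k) + (exp t / fact j) * m ^ j"
    using Maclaurin_exp_le[of m j] by blast
  have "(\<Sum>k<j. m ^ k / fact k * exp (- m)) = exp (- m) * (\<Sum>k<j. m ^ k / fact k)"
    by (simp add: sum_distrib_left mult.commute)
  also have "\<dots> = exp (- m) * (exp m - (exp t / fact j) * m ^ j)" using t(2) by simp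
  also have "\<dots> = 1 - exp (- m) * exp t * m ^ j / fact j"
    by (simp add: algebra_simps exp_minus_inverse)
  finally have eq: "1 - (\<Sum>k<j. m ^ k / fact k * exp (- m)) = exp (- m) * exp t * m ^ j / fact j"
    by simp
  have "exp (- m) * exp t \<le> 1"
    using t(1) assms by (simp add: mult_exp_exp)
  then have "exp (- m) * exp t * m ^ j / fact j \<le> 1 * m ^ j / fact j"
    using assms by (intro divide_right_mono mult_right_mono) auto
  then show ?thesis using eq by simp
qed

lemma Ioc_times_Ioc_sets_lborel:
  "({a<..b} \<times> {c<..d} :: (real \<times> real) set) \<in> sets (lborel :: (real \<times> real) measure)"
proof -
  have "({a<..b} \<times> {c<..d} :: (real \<times> real) set) \<in> sets (borel \<Otimes>\<^sub>M (borel :: real measure))"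
    by (intro pair_measureI) auto
  then show ?thesis unfolding borel_prod sets_lborel .
qed

lemma emeasure_lborel_Ioc_times_Ioc:
  assumes "a \<le> b" "c \<le> d"
  shows "emeasure (lborel :: (real \<times> real) measure) ({a<..b} \<times> {c<..d}) = ennreal ((b - a) * (d - c))"
proof -
  have "emeasure (lborel :: (real \<times> real) measure) ({a<..b} \<times> {c<..d})
      = emeasure lborel {a<..b} * emeasure lborel {c<..d}"
    unfolding lborel_prod[symmetric]
    by (rule sigma_finite_measure.emeasure_pair_measure_Times[OF sigma_finite_lborel]) auto
  then show ?thesis using assms by (simp add: ennreal_mult)
qed

lemma card_ge_2I: "finite A \<Longrightarrow> a \<in> A \<Longrightarrow> b \<in> A \<Longrightarrow> a \<noteq> b \<Longrightarrow> 2 \<le> card A"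
  using card_mono[of A "{a, b}"] by auto

lemma (in prob_space) AE_ex_notin_of_measure_le:
  assumes sets: "\<And>m. A m \<in> events" and small: "\<And>m. prob (A m) \<le> c / Suc m"
  shows "AE \<omega> in M. \<exists>m. \<omega> \<notin> A m"
proof -
  have "prob (\<Inter>m. A m) \<le> 0"
  proof (rule ccontr)
    assume "\<not> prob (\<Inter>m. A m) \<le> 0"
    then have pos: "0 < prob (\<Inter>m. A m)" by simp
    obtain m :: nat where "c / prob (\<Inter>m. A m) < real m" using reals_Archimedean2 by blast
    then have "c / Suc m < prob (\<Inter>m. A m)" using pos by (simp add: field_simps)
    also have "\<dots> \<le> prob (A m)" using sets by (intro finite_measure_mono) auto
    finally show False using small[of m] by simp
  qed
  then have "(\<Inter>m. A m) \<in> null_sets M"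
    using sets by (simp add: emeasure_eq_measure null_sets_def sets.countable_INT measure_le_0_iff)
  then show ?thesis by (auto dest: AE_not_in)
qed

locale marked_Poisson_process = M: prob_space M + F: prob_space F
  for M :: "'a measure" and F :: "real measure" +
  fixes Q :: "'a \<Rightarrow> mconf"
  assumes sets_F: "sets F = sets borel" and F_nonpos: "emeasure F {..0} = 0"
    and Poisson: "marked_poisson M Q F"
begin

abbreviation intensity :: "((real \<times> real) \<times> real) measure" where
  "intensity \<equiv> lborel \<Otimes>\<^sub>M F"

context
  fixes B :: "((real \<times> real) \<times> real) set"
  assumes B: "B \<in> sets intensity" "emeasure intensity B < \<infinity>"
begin

lemma AE_finite_points: "AE \<omega> in M. finite (Q \<omega> \<inter> B)"
  using Poisson B unfolding marked_poisson_def Let_def by blast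

lemma count_eq_event: "{\<omega> \<in> space M. card (Q \<omega> \<inter> B) = k} \<in> sets M"
  using Poisson B unfolding marked_poisson_def Let_def by blast

lemma prob_count_eq:
  "M.prob {\<omega> \<in> space M. card (Q \<omega> \<inter> B) = k}
     = measure intensity B ^ k / fact k * exp (- measure intensity B)"
  using Poisson B unfolding marked_poisson_def Let_def by blast

lemma count_ge_event: "{\<omega> \<in> space M. j \<le> card (Q \<omega> \<inter> B)} \<in> sets M"
proof -
  have "{\<omega> \<in> space M. j \<le> card (Q \<omega> \<inter> B)}
      = space M - (\<Union>k\<in>{..<j}. {\<omega> \<in> space M. card (Q \<omega> \<inter> B) = k})"
    by auto
  also have "\<dots> \<in> sets M" using count_eq_event by auto
  finally show ?thesis .
qed

lemma prob_count_ge_le: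
  "M.prob {\<omega> \<in> space M. j \<le> card (Q \<omega> \<inter> B)} \<le> measure intensity B ^ j / fact j"
proof -
  let ?A = "\<lambda>k. {\<omega> \<in> space M. card (Q \<omega> \<inter> B) = k}"
  have U: "(\<Union>k\<in>{..<j}. ?A k) \<in> sets M" using count_eq_event by auto
  have "{\<omega> \<in> space M. j \<le> card (Q \<omega> \<inter> B)} = space M - (\<Union>k\<in>{..<j}. ?A k)" by auto
  moreover have "M.prob (\<Union>k\<in>{..<j}. ?A k) = (\<Sum>k<j. M.prob (?A k))"
    by (rule M.finite_measure_finite_Union) (use count_eq_event in \<open>auto simp: disjoint_family_on_def\<close>)
  ultimately have "M.prob {\<omega> \<in> space M. j \<le> card (Q \<omega> \<inter> B)}
      = 1 - (\<Sum>k<j. measure intensity B ^ k / fact k * exp (- measure intensity B))"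
    using M.prob_compl[OF U] prob_count_eq by simp
  also have "\<dots> \<le> measure intensity B ^ j / fact j" by (rule Poisson_tail_le) simp
  finally show ?thesis .
qed

end

lemma intensity_Times:
  assumes "A \<in> sets (lborel :: (real \<times> real) measure)" "S \<in> sets borel"
  shows "A \<times> S \<in> sets intensity" "emeasure intensity (A \<times> S) = emeasure lborel A * emeasure F S"
  using assms by (auto intro!: pair_measureI F.emeasure_pair_measure_Times simp: sets_F)

lemma intensity_box:
  assumes "a \<le> b" "c \<le> d" "S \<in> sets borel"
  shows "({a<..b} \<times> {c<..d}) \<times> S \<in> sets intensity"
    and "emeasure intensity (({a<..b} \<times> {c<..d}) \<times> S) < \<infinity>"
    and "measure intensity (({a<..b} \<times> {c<..d}) \<times> S) = (b - a) * (d - c) * measure F S"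
proof -
  show "({a<..b} \<times> {c<..d}) \<times> S \<in> sets intensity"
    by (rule intensity_Times(1)[OF Ioc_times_Ioc_sets_lborel assms(3)])
  have e: "emeasure intensity (({a<..b} \<times> {c<..d}) \<times> S) = ennreal ((b - a) * (d - c) * measure F S)"
    using intensity_Times(2)[OF Ioc_times_Ioc_sets_lborel assms(3)]
      emeasure_lborel_Ioc_times_Ioc[OF assms(1,2)] assms
    by (simp add: F.emeasure_eq_measure ennreal_mult)
  then show "emeasure intensity (({a<..b} \<times> {c<..d}) \<times> S) < \<infinity>" by simp
  show "measure intensity (({a<..b} \<times> {c<..d}) \<times> S) = (b - a) * (d - c) * measure F S"
    unfolding measure_def e using assms by simp
qed

lemma measure_intensity_box_UNIV:
  assumes "a \<le> b" "c \<le> d"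
  shows "measure intensity (({a<..b} \<times> {c<..d}) \<times> UNIV) = (b - a) * (d - c)"
  using intensity_box(3)[OF assms, of UNIV] F.prob_space sets_eq_imp_space_eq[OF sets_F] by simp

lemma AE_no_points_in_null:
  assumes "B \<in> sets intensity" "emeasure intensity B = 0"
  shows "AE \<omega> in M. Q \<omega> \<inter> B = {}"
proof -
  have fin: "emeasure intensity B < \<infinity>" using assms(2) by simp
  have "measure intensity B = 0" using assms(2) by (simp add: measure_def)
  then have "M.prob {\<omega> \<in> space M. card (Q \<omega> \<inter> B) = 0} = 1"
    using prob_count_eq[OF assms(1) fin, of 0] by simp
  then have "AE \<omega> in M. \<omega> \<in> {\<omega> \<in> space M. card (Q \<omega> \<inter> B) = 0}" by (rule M.AE_prob_1)
  with AE_finite_points[OF assms(1) fin] show ?thesis by eventually_elim auto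
qed

lemma AE_finite_in_squares:
  "AE \<omega> in M. \<forall>n::nat. finite {a\<in>Q \<omega>. \<bar>fst (fst a)\<bar> \<le> real n \<and> \<bar>snd (fst a)\<bar> \<le> real n}"
proof (subst AE_all_countable, intro allI)
  fix n :: nat
  let ?B = "({- real n - 1<..real n} \<times> {- real n - 1<..real n}) \<times> (UNIV :: real set)"
  have "AE \<omega> in M. finite (Q \<omega> \<inter> ?B)"
    by (rule AE_finite_points[OF intensity_box(1,2)]) auto
  then show "AE \<omega> in M. finite {a\<in>Q \<omega>. \<bar>fst (fst a)\<bar> \<le> real n \<and> \<bar>snd (fst a)\<bar> \<le> real n}"
    by eventually_elim (auto elim!: finite_subset[rotated])
qed

lemma AE_positive_weights: "AE \<omega> in M. \<forall>a\<in>Q \<omega>. 0 < snd a"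
proof -
  let ?B = "(UNIV :: (real \<times> real) set) \<times> {..(0::real)}"
  have "AE \<omega> in M. Q \<omega> \<inter> ?B = {}"
    using intensity_Times[of UNIV "{..0}"] F_nonpos by (intro AE_no_points_in_null) auto
  then show ?thesis by eventually_elim force
qed

lemma AE_avoid_atoms:
  assumes "locally_finite_borel \<nu>"
  shows "AE \<omega> in M. \<forall>a\<in>Q \<omega>. 0 < snd (fst a) \<longrightarrow> emeasure \<nu> {fst (fst a)} = 0"
proof -
  let ?A = "{x. emeasure \<nu> {x} \<noteq> 0} \<times> (UNIV :: real set)"
  have "{x. emeasure \<nu> {x} \<noteq> 0} \<in> null_sets lborel"
    by (rule countable_imp_null_set_lborel[OF countable_atoms[OF assms]])
  then have "?A \<in> null_sets (lborel \<Otimes>\<^sub>M (lborel :: real measure))"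
    by (intro sigma_finite_measure.times_in_null_sets1[OF sigma_finite_lborel]) auto
  then have A: "?A \<in> null_sets (lborel :: (real \<times> real) measure)" by (simp add: lborel_prod)
  have "AE \<omega> in M. Q \<omega> \<inter> (?A \<times> UNIV) = {}"
    using intensity_Times[of ?A UNIV] null_setsD1[OF A] null_setsD2[OF A]
    by (intro AE_no_points_in_null) auto
  then show ?thesis by eventually_elim force
qed

text \<open>
  Strips of width \<open>1/(m+1)\<close> carry at least two points with probability \<open>O(1/(m+1)\<^sup>2)\<close> each;
  there are \<open>O(m+1)\<close> of them, so a.s. at some resolution every strip carries at most one point.
\<close>

lemma AE_at_most_one_point_per_strip:
  fixes S :: "nat \<Rightarrow> nat \<Rightarrow> ((real \<times> real) \<times> real) set" and k :: "nat \<Rightarrow> nat"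
  assumes S: "\<And>m i. S m i \<in> sets intensity" "\<And>m i. emeasure intensity (S m i) < \<infinity>"
    and small: "\<And>m. (\<Sum>i<k m. (measure intensity (S m i))\<^sup>2) \<le> c / Suc m"
  shows "AE \<omega> in M. \<exists>m. \<forall>i<k m. card (Q \<omega> \<inter> S m i) < 2"
proof -
  define A where "A m = (\<Union>i<k m. {\<omega> \<in> space M. 2 \<le> card (Q \<omega> \<inter> S m i)})" for m
  have events: "{\<omega> \<in> space M. 2 \<le> card (Q \<omega> \<inter> S m i)} \<in> sets M" for m i
    by (rule count_ge_event[OF S])
  have "AE \<omega> in M. \<exists>m. \<omega> \<notin> A m"
  proof (rule M.AE_ex_notin_of_measure_le)
    show "A m \<in> sets M" for m unfolding A_def using events by auto
    fix m
    have "M.prob (A m) \<le> (\<Sum>i<k m. M.prob {\<omega> \<in> space M. 2 \<le> card (Q \<omega> \<inter> S m i)})"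
      unfolding A_def by (rule M.finite_measure_subadditive_finite) (use events in auto)
    also have "\<dots> \<le> (\<Sum>i<k m. (measure intensity (S m i))\<^sup>2)"
    proof (rule sum_mono)
      fix i
      have "M.prob {\<omega> \<in> space M. 2 \<le> card (Q \<omega> \<inter> S m i)} \<le> measure intensity (S m i) ^ 2 / fact 2"
        by (rule prob_count_ge_le[OF S])
      also have "\<dots> \<le> (measure intensity (S m i))\<^sup>2" by (simp add: divide_le_eq)
      finally show "M.prob {\<omega> \<in> space M. 2 \<le> card (Q \<omega> \<inter> S m i)} \<le> (measure intensity (S m i))\<^sup>2" .
    qed
    also have "\<dots> \<le> c / Suc m" by (rule small)
    finally show "M.prob (A m) \<le> c / Suc m" .
  qed
  with AE_space show ?thesis by eventually_elim (auto simp: A_def not_le)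
qed

lemma AE_distinct_coordinate_in_box:
  fixes g :: "(real \<times> real) \<times> real \<Rightarrow> real" and S :: "nat \<Rightarrow> nat \<Rightarrow> ((real \<times> real) \<times> real) set"
    and lo L :: real and N :: nat
  assumes S: "\<And>m i. S m i \<in> sets intensity" "\<And>m i. emeasure intensity (S m i) < \<infinity>"
    and S_measure: "\<And>m i. measure intensity (S m i) = L / Suc m"
    and range: "\<And>a. a \<in> K \<Longrightarrow> lo < g a \<and> g a \<le> lo + real N"
    and strip: "\<And>m i a. a \<in> K \<Longrightarrow> lo + real i * (1 / Suc m) < g a \<Longrightarrow>
                  g a \<le> lo + (real i + 1) * (1 / Suc m) \<Longrightarrow> a \<in> S m i"
  shows "AE \<omega> in M. \<forall>a\<in>Q \<omega>. \<forall>b\<in>Q \<omega>. a \<in> K \<longrightarrow> b \<in> K \<longrightarrow> a \<noteq> b \<longrightarrow> g a \<noteq> g b"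
proof -
  have "AE \<omega> in M. \<exists>m. \<forall>i<N * Suc m. card (Q \<omega> \<inter> S m i) < 2"
    by (rule AE_at_most_one_point_per_strip[OF S, where c = "real N * L\<^sup>2"])
       (simp add: S_measure power2_eq_square field_simps del: of_nat_Suc, simp add: algebra_simps)
  moreover have "AE \<omega> in M. \<forall>m i. finite (Q \<omega> \<inter> S m i)"
    by (subst AE_all_countable, intro allI, subst AE_all_countable, intro allI AE_finite_points S)
  ultimately show ?thesis
  proof eventually_elim
    case (elim \<omega>)
    obtain m where m: "\<And>i. i < N * Suc m \<Longrightarrow> card (Q \<omega> \<inter> S m i) < 2" using elim(1) by blast
    show ?case
    proof (intro ballI impI notI)
      fix a b assume ab: "a \<in> Q \<omega>" "b \<in> Q \<omega>" "a \<in> K" "b \<in> K" "a \<noteq> b" "g a = g b"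
      have "lo + real (N * Suc m) * (1 / Suc m) = lo + real N" by (simp add: field_simps)
      then obtain i where i: "i < N * Suc m" "lo + real i * (1 / Suc m) < g a"
          "g a \<le> lo + (real i + 1) * (1 / Suc m)"
        using Ioc_grid_index[of "1 / Suc m" lo "g a" "N * Suc m"] range[OF ab(3)] by auto
      then have "a \<in> S m i" "b \<in> S m i" using strip ab(3,4,6) by metis+
      then have "2 \<le> card (Q \<omega> \<inter> S m i)"
        using ab(1,2,5) elim(2) by (intro card_ge_2I[of _ a b]) auto
      then show False using m[OF i(1)] by simp
    qed
  qed
qed

lemma AE_distinct_coordinates_in_square:
  fixes n :: nat
  defines "K \<equiv> ({- real n<..real n} \<times> {0<..real n}) \<times> (UNIV :: real set)"
  shows "AE \<omega> in M. \<forall>a\<in>Q \<omega>. \<forall>b\<in>Q \<omega>. a \<in> K \<longrightarrow> b \<in> K \<longrightarrow> a \<noteq> b \<longrightarrow>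
           fst (fst a) \<noteq> fst (fst b) \<and> snd (fst a) \<noteq> snd (fst b)"
proof -
  define X where "X m i = ({- real n + real i * (1 / Suc m)<..- real n + (real i + 1) * (1 / Suc m)}
                           \<times> {0<..real n}) \<times> (UNIV :: real set)" for m i :: nat
  define T where "T m i = ({- real n<..real n} \<times> {0 + real i * (1 / Suc m)<..0 + (real i + 1) * (1 / Suc m)})
                           \<times> (UNIV :: real set)" for m i :: nat
  have "AE \<omega> in M. \<forall>a\<in>Q \<omega>. \<forall>b\<in>Q \<omega>. a \<in> K \<longrightarrow> b \<in> K \<longrightarrow> a \<noteq> b \<longrightarrow> fst (fst a) \<noteq> fst (fst b)"
  proof (rule AE_distinct_coordinate_in_box[where S = X and lo = "- real n" and N = "2 * n"])
    show "X m i \<in> sets intensity" "emeasure intensity (X m i) < \<infinity>" for m i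
      unfolding X_def by (intro intensity_box(1,2); simp add: field_simps)+
    show "measure intensity (X m i) = real n / Suc m" for m i
      unfolding X_def by (subst measure_intensity_box_UNIV) (auto simp: field_simps)
  qed (auto simp: K_def X_def mem_Times_iff)
  moreover have "AE \<omega> in M. \<forall>a\<in>Q \<omega>. \<forall>b\<in>Q \<omega>. a \<in> K \<longrightarrow> b \<in> K \<longrightarrow> a \<noteq> b \<longrightarrow> snd (fst a) \<noteq> snd (fst b)"
  proof (rule AE_distinct_coordinate_in_box[where S = T and lo = 0 and N = n])
    show "T m i \<in> sets intensity" "emeasure intensity (T m i) < \<infinity>" for m i
      unfolding T_def by (intro intensity_box(1,2); simp add: field_simps)+
    show "measure intensity (T m i) = 2 * real n / Suc m" for m i
      unfolding T_def by (subst measure_intensity_box_UNIV) (auto simp: field_simps)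
  qed (auto simp: K_def T_def mem_Times_iff)
  ultimately show ?thesis by eventually_elim blast
qed

lemma AE_distinct_coordinates:
  "AE \<omega> in M. \<forall>a\<in>Q \<omega>. \<forall>b\<in>Q \<omega>. 0 < snd (fst a) \<longrightarrow> 0 < snd (fst b) \<longrightarrow> a \<noteq> b \<longrightarrow>
        fst (fst a) \<noteq> fst (fst b) \<and> snd (fst a) \<noteq> snd (fst b)"
proof -
  let ?K = "\<lambda>n::nat. ({- real n<..real n} \<times> {0<..real n}) \<times> (UNIV :: real set)"
  have "AE \<omega> in M. \<forall>n. \<forall>a\<in>Q \<omega>. \<forall>b\<in>Q \<omega>. a \<in> ?K n \<longrightarrow> b \<in> ?K n \<longrightarrow> a \<noteq> b \<longrightarrow>
          fst (fst a) \<noteq> fst (fst b) \<and> snd (fst a) \<noteq> snd (fst b)"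
    by (subst AE_all_countable) (intro allI AE_distinct_coordinates_in_square)
  then show ?thesis
  proof eventually_elim
    case (elim \<omega>)
    show ?case
    proof (intro ballI impI)
      fix a b assume ab: "a \<in> Q \<omega>" "b \<in> Q \<omega>" "0 < snd (fst a)" "0 < snd (fst b)" "a \<noteq> b"
      obtain n :: nat where "\<bar>fst (fst a)\<bar> + \<bar>fst (fst b)\<bar> + snd (fst a) + snd (fst b) < real n"
        using reals_Archimedean2 by blast
      then have "a \<in> ?K n" "b \<in> ?K n"
        using ab by (auto simp: mem_Times_iff abs_if split: if_splits)
      then show "fst (fst a) \<noteq> fst (fst b) \<and> snd (fst a) \<noteq> snd (fst b)"
        using elim ab by blast
    qed
  qed
qed

lemma intensity_dyadic_cell:
  assumes T: "0 < T"
  shows "dyadic_cell j T p \<in> sets intensity" "emeasure intensity (dyadic_cell j T p) < \<infinity>"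
    and "measure intensity (dyadic_cell j T p) = 2 * T"
proof -
  have le1: "- (4 ^ j) + real (fst p) * (2 * 2 ^ j) \<le> - (4 ^ j) + (real (fst p) + 1) * (2 * 2 ^ j :: real)"
    by (simp add: algebra_simps)
  have le2: "real (snd p) * (T / 2 ^ j) \<le> (real (snd p) + 1) * (T / 2 ^ j)"
    using T by (intro mult_right_mono) auto
  show "dyadic_cell j T p \<in> sets intensity" "emeasure intensity (dyadic_cell j T p) < \<infinity>"
    unfolding dyadic_cell_def by (intro intensity_box(1,2)[OF le1 le2]; simp)+
  have "(- (4 ^ j) + (real (fst p) + 1) * (2 * 2 ^ j)) - (- (4 ^ j) + real (fst p) * (2 * 2 ^ j))
      = (2 * 2 ^ j :: real)"
    by (simp add: algebra_simps)
  moreover have "(real (snd p) + 1) * (T / 2 ^ j) - real (snd p) * (T / 2 ^ j) = T / 2 ^ j"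
    by (simp add: algebra_simps add_divide_distrib)
  ultimately show "measure intensity (dyadic_cell j T p) = 2 * T"
    unfolding dyadic_cell_def measure_intensity_box_UNIV[OF le1 le2] by simp
qed

definition crowded_cells :: "nat \<Rightarrow> real \<Rightarrow> 'a set" where
  "crowded_cells j T =
     (\<Union>p\<in>{..<(2::nat) ^ j} \<times> {..<(2::nat) ^ j}. {\<omega> \<in> space M. j \<le> card (Q \<omega> \<inter> dyadic_cell j T p)})"

lemma crowded_cell_event:
  "0 < T \<Longrightarrow> {\<omega> \<in> space M. j \<le> card (Q \<omega> \<inter> dyadic_cell j T p)} \<in> sets M"
  by (rule count_ge_event[OF intensity_dyadic_cell(1,2)])

lemma crowded_cells_event: "0 < T \<Longrightarrow> crowded_cells j T \<in> sets M"
  unfolding crowded_cells_def by (rule sets.finite_UN) (auto intro: crowded_cell_event)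

lemma prob_crowded_cells_le:
  assumes T: "0 < T"
  shows "M.prob (crowded_cells j T) \<le> (8 * T) ^ j / fact j"
proof -
  have "M.prob (crowded_cells j T)
      \<le> (\<Sum>p\<in>{..<(2::nat) ^ j} \<times> {..<(2::nat) ^ j}. M.prob {\<omega> \<in> space M. j \<le> card (Q \<omega> \<inter> dyadic_cell j T p)})"
    unfolding crowded_cells_def
    by (rule M.finite_measure_subadditive_finite) (auto intro: crowded_cell_event[OF T])
  also have "\<dots> \<le> (\<Sum>p\<in>{..<(2::nat) ^ j} \<times> {..<(2::nat) ^ j}. (2 * T) ^ j / fact j)"
  proof (rule sum_mono)
    fix p :: "nat \<times> nat"
    have "M.prob {\<omega> \<in> space M. j \<le> card (Q \<omega> \<inter> dyadic_cell j T p)}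
        \<le> measure intensity (dyadic_cell j T p) ^ j / fact j"
      by (rule prob_count_ge_le[OF intensity_dyadic_cell(1,2)[OF T]])
    then show "M.prob {\<omega> \<in> space M. j \<le> card (Q \<omega> \<inter> dyadic_cell j T p)} \<le> (2 * T) ^ j / fact j"
      unfolding intensity_dyadic_cell(3)[OF T] .
  qed
  also have "\<dots> = real (2 ^ j * 2 ^ j) * ((2 * T) ^ j / fact j)" by simp
  also have "\<dots> = (8 * T) ^ j / fact j"
  proof -
    have "(8 * T) ^ j = (2 * 2 * (2 * T)) ^ j" by simp
    also have "\<dots> = 2 ^ j * 2 ^ j * (2 * T) ^ j" by (simp only: power_mult_distrib)
    also have "\<dots> = real ((2::nat) ^ j * 2 ^ j) * (2 * T) ^ j" by simp
    finally show ?thesis by (metis times_divide_eq_right)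
  qed
  finally show ?thesis .
qed

lemma intensity_heavy_zone:
  assumes T: "0 < T"
  shows "heavy_zone j T a \<in> sets intensity" "emeasure intensity (heavy_zone j T a) < \<infinity>"
    and "measure intensity (heavy_zone j T a) = 2 * 4 ^ j * T * F.prob {4 * j / a<..}"
  using intensity_box[OF _ _ greaterThan_borel, of "- (4 ^ j)" "4 ^ j" 0 T "4 * j / a"] T
  unfolding heavy_zone_def by simp_all

lemma prob_F_greaterThan_le:
  assumes a: "0 < a" and int: "integrable F (\<lambda>x. exp (a * x))"
  shows "F.prob {s<..} \<le> (\<integral>x. exp (a * x) \<partial>F) / exp (a * s)"
proof -
  have eq: "{x \<in> space F. exp (a * s) \<le> exp (a * x)} = {s..}"
    using a sets_eq_imp_space_eq[OF sets_F] by auto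
  have "F.prob {s<..} \<le> F.prob {s..}" by (rule F.finite_measure_mono) (auto simp: sets_F)
  also have "\<dots> = F.prob {x \<in> space F. exp (a * s) \<le> exp (a * x)}" unfolding eq ..
  also have "\<dots> \<le> (\<integral>x. exp (a * x) \<partial>F) / exp (a * s)"
    by (rule integral_Markov_inequality_measure[OF int, of "space F"]) auto
  finally show ?thesis .
qed

lemma prob_heavy_point_le:
  assumes T: "0 < T" and a: "0 < a" and int: "integrable F (\<lambda>x. exp (a * x))"
  shows "{\<omega> \<in> space M. 1 \<le> card (Q \<omega> \<inter> heavy_zone j T a)} \<in> sets M"
    and "M.prob {\<omega> \<in> space M. 1 \<le> card (Q \<omega> \<inter> heavy_zone j T a)}
           \<le> 2 * T * (\<integral>x. exp (a * x) \<partial>F) * (4 / exp 4) ^ j"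
proof -
  note zone = intensity_heavy_zone[OF T, of j a]
  show "{\<omega> \<in> space M. 1 \<le> card (Q \<omega> \<inter> heavy_zone j T a)} \<in> sets M"
    by (rule count_ge_event[OF zone(1,2)])
  have "exp (a * (4 * j / a)) = exp 4 ^ j"
    using a exp_of_nat_mult[of j 4] by (simp add: mult.commute)
  then have tail: "F.prob {4 * j / a<..} \<le> (\<integral>x. exp (a * x) \<partial>F) / exp 4 ^ j"
    using prob_F_greaterThan_le[OF a int, of "4 * j / a"] by simp
  have "M.prob {\<omega> \<in> space M. 1 \<le> card (Q \<omega> \<inter> heavy_zone j T a)} \<le> measure intensity (heavy_zone j T a)"
    using prob_count_ge_le[OF zone(1,2), of 1] by simp
  also have "\<dots> \<le> 2 * 4 ^ j * T * ((\<integral>x. exp (a * x) \<partial>F) / exp 4 ^ j)"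
    unfolding zone(3) using T tail by (intro mult_left_mono) auto
  also have "\<dots> = 2 * T * (\<integral>x. exp (a * x) \<partial>F) * (4 / exp 4) ^ j"
    by (simp add: power_divide)
  finally show "M.prob {\<omega> \<in> space M. 1 \<le> card (Q \<omega> \<inter> heavy_zone j T a)}
      \<le> 2 * T * (\<integral>x. exp (a * x) \<partial>F) * (4 / exp 4) ^ j" .
qed

lemma AE_eventually_not_crowded:
  assumes T: "0 < T"
  shows "AE \<omega> in M. \<forall>\<^sub>F j in sequentially. \<omega> \<notin> crowded_cells j T"
proof -
  have "AE \<omega> in M. \<forall>\<^sub>F j in sequentially. \<omega> \<in> space M - crowded_cells j T"
  proof (rule borel_cantelli_AE1)
    show "summable (\<lambda>j. M.prob (crowded_cells j T))"
    proof (rule summable_comparison_test'[where N = 0])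
      show "summable (\<lambda>j. inverse (fact j) * (8 * T) ^ j)" by (rule summable_exp)
      show "norm (M.prob (crowded_cells j T)) \<le> inverse (fact j) * (8 * T) ^ j" for j
        using prob_crowded_cells_le[OF T, of j] by (simp add: field_simps)
    qed
  qed (auto simp: crowded_cells_event[OF T] M.emeasure_eq_measure)
  then show ?thesis by eventually_elim (simp add: eventually_mono)
qed

lemma AE_eventually_no_heavy_point:
  assumes T: "0 < T" and a: "0 < a" and int: "integrable F (\<lambda>x. exp (a * x))"
  shows "AE \<omega> in M. \<forall>\<^sub>F j in sequentially. Q \<omega> \<inter> heavy_zone j T a = {}"
proof -
  let ?E = "\<lambda>j. {\<omega> \<in> space M. 1 \<le> card (Q \<omega> \<inter> heavy_zone j T a)}"
  have "AE \<omega> in M. \<forall>\<^sub>F j in sequentially. \<omega> \<in> space M - ?E j"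
  proof (rule borel_cantelli_AE1)
    show "summable (\<lambda>j. M.prob (?E j))"
    proof (rule summable_comparison_test'[where N = 0])
      have "4 < exp (4::real)" using exp_ge_add_one_self[of 4] by simp
      then show "summable (\<lambda>j. 2 * T * (\<integral>x. exp (a * x) \<partial>F) * (4 / exp 4) ^ j)"
        by (intro summable_mult summable_geometric) simp
      show "norm (M.prob (?E j)) \<le> 2 * T * (\<integral>x. exp (a * x) \<partial>F) * (4 / exp 4) ^ j" for j
        using prob_heavy_point_le(2)[OF T a int, of j] by simp
    qed
  qed (use prob_heavy_point_le(1)[OF T a int] in \<open>auto simp: M.emeasure_eq_measure\<close>)
  moreover have "\<forall>j. AE \<omega> in M. finite (Q \<omega> \<inter> heavy_zone j T a)"
    by (intro allI AE_finite_points intensity_heavy_zone T)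
  then have "AE \<omega> in M. \<forall>j. finite (Q \<omega> \<inter> heavy_zone j T a)" by (simp add: AE_all_countable)
  ultimately show ?thesis
  proof eventually_elim
    case (elim \<omega>)
    show ?case
      using elim(1)
    proof (rule eventually_mono)
      fix j assume "\<omega> \<in> space M - ?E j"
      then show "Q \<omega> \<inter> heavy_zone j T a = {}" using elim(2) by (auto simp: Suc_le_eq card_gt_0_iff)
    qed
  qed
qed

lemma AE_LPP_sublinear_at:
  assumes T: "0 < T" and a: "0 < a" and int: "integrable F (\<lambda>x. exp (a * x))"
  shows "AE \<omega> in M. \<forall>e>0. \<exists>R. \<forall>r\<ge>R. LPP (Q \<omega>) (-r,0) (r, T) \<le> ereal (e * r)"
proof -
  have "AE \<omega> in M. \<forall>j p. finite (Q \<omega> \<inter> dyadic_cell j T p)"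
    using AE_finite_points[OF intensity_dyadic_cell(1,2)[OF T]] by (simp add: AE_all_countable)
  moreover note AE_eventually_not_crowded[OF T]
  moreover note AE_eventually_no_heavy_point[OF T a int]
  moreover note AE_space
  ultimately show ?thesis
  proof eventually_elim
    case (elim \<omega>)
    note finite_cells = elim(1) and in_space = elim(4)
    from elim(2,3) have bound: "\<forall>\<^sub>F j in sequentially.
        LPP (Q \<omega>) (- (4 ^ j), 0) (4 ^ j, T) \<le> ereal (8 / a * real j ^ 2 * 2 ^ j)"
    proof eventually_elim
      case (elim j)
      have "LPP (Q \<omega>) (- (4 ^ j), 0) (4 ^ j, T) \<le> ereal (2 * 2 ^ j * j * (4 * j / a))"
      proof (rule LPP_dyadic_bound[OF T])
        fix i l :: nat assume "i < 2 ^ j" "l < 2 ^ j"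
        then have "\<not> j \<le> card (Q \<omega> \<inter> dyadic_cell j T (i,l))"
          using elim(1) in_space unfolding crowded_cells_def by blast
        then show "finite (Q \<omega> \<inter> dyadic_cell j T (i,l)) \<and> card (Q \<omega> \<inter> dyadic_cell j T (i,l)) \<le> j"
          using finite_cells by simp
      next
        fix b assume "b \<in> Q \<omega>" "in_box (- (4 ^ j), 0) (4 ^ j, T) b"
        then show "snd b \<le> 4 * j / a"
          using elim(2) by (force simp: heavy_zone_def in_box_def mem_Times_iff)
      qed (use a in simp)
      then show ?case by (simp add: power2_eq_square field_simps)
    qed
    show ?case
    proof (intro allI impI)
      fix e :: real assume "0 < e"
      then obtain R where "\<And>r. R \<le> r \<Longrightarrow> LPP (Q \<omega>) (-r,0) (r,T) \<le> ereal (e * r)"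
        using LPP_sublinear_of_dyadic_bound[OF bound] by blast
      then show "\<exists>R. \<forall>r\<ge>R. LPP (Q \<omega>) (-r,0) (r,T) \<le> ereal (e * r)" by blast
    qed
  qed
qed

lemma AE_LPP_sublinear:
  assumes a: "0 < a" and int: "integrable F (\<lambda>x. exp (a * x))"
  shows "AE \<omega> in M. \<forall>T::nat. \<forall>e>0. \<exists>R. \<forall>r\<ge>R. LPP (Q \<omega>) (-r,0) (r, real T) \<le> ereal (e * r)"
proof (subst AE_all_countable, intro allI)
  fix T :: nat
  show "AE \<omega> in M. \<forall>e>0. \<exists>R. \<forall>r\<ge>R. LPP (Q \<omega>) (-r,0) (r, real T) \<le> ereal (e * r)"
  proof (cases "T = 0")
    case True
    then have "LPP (Q \<omega>) (-r,0) (r, real T) = 0" for \<omega> r by (intro LPP_flat_box) simp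
    then show ?thesis by (intro AE_I2 allI impI exI[of _ 0]) simp
  qed (use AE_LPP_sublinear_at[OF _ a int] in simp)
qed

lemma AE_regular_config:
  assumes "\<nu> \<in> calN" and a: "0 < a" and int: "integrable F (\<lambda>x. exp (a * x))"
  shows "AE \<omega> in M. regular_config \<nu> (Q \<omega>)"
  using AE_finite_in_squares AE_positive_weights AE_distinct_coordinates
    AE_avoid_atoms[OF calN_locally_finite_borel[OF assms(1)]] AE_LPP_sublinear[OF a int]
  unfolding regular_config_def by eventually_elim blast

end

theorem proposition2p1:
  fixes M :: "'a measure" and Q :: "'a \<Rightarrow> mconf" and F :: "real measure"
    and \<nu> :: "real measure"
  assumes "prob_space M"
    and "prob_space F" and "sets F = sets borel" and "emeasure F {..0} = 0"
    and "\<exists>a>0. integrable F (\<lambda>x. exp (a * x))"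
    and "marked_poisson M Q F"
    and "\<nu> \<in> calN"
  shows "AE \<omega> in M.
           (\<forall>x t. 0 \<le> t \<longrightarrow> \<bar>Lnu (Q \<omega>) \<nu> x t\<bar> \<noteq> \<infinity>) \<and>
           (\<forall>t\<ge>0. is_M (Q \<omega>) \<nu> t (Mt (Q \<omega>) \<nu> t)) \<and>
           Mt (Q \<omega>) \<nu> 0 = \<nu> \<and>
           (\<forall>x0 t w. ((x0, t), w) \<in> Q \<omega> \<and> 0 < t \<longrightarrow>
              (let M1 = Mt (Q \<omega>) \<nu> t;
                   Q0 = Q \<omega> - {((x0, t), w)};
                   M0 = Mt Q0 \<nu> t
               in is_M Q0 \<nu> t M0 \<and>
                  (\<forall>A \<in> sets borel. A \<subseteq> {..<x0} \<longrightarrow> emeasure M1 A = emeasure M0 A) \<and>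
                  emeasure M1 {x0} = emeasure M0 {x0} + ennreal w \<and>
                  (\<forall>x > x0. emeasure M1 {x0<..x} = ennreal (max (measure M0 {x0<..x} - w) 0))))"
proof -
  interpret marked_Poisson_process M F Q
    using assms(1-4,6) by (simp add: marked_Poisson_process_def marked_Poisson_process_axioms_def)
  obtain a where "0 < a" "integrable F (\<lambda>x. exp (a * x))" using assms(5) by blast
  with AE_regular_config[OF assms(7)] have "AE \<omega> in M. regular_config \<nu> (Q \<omega>)" by blast
  then show ?thesis
    by eventually_elim (rule regular_config_Hammersley_dynamics[OF assms(7)])
qed

end
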